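(* Let $a>0$, let $\sigma$ be a probability measure on $[0,a]$, and let $\mu=\int_0^a\mathcal{P}(\lambda)\,\sigma(\mathrm{d}\lambda)$. Then, with $\rho$ the Euclidean distance on $\mathbb{N}$, $$h_{a+a^2/4}\big(W_{1,\rho}(\nu,\mu)\big)\le H(\nu|\mu)\qquad\text{for all }\nu\in\mathcal{M}_1(\mathbb{N}).$$
   Context: $\mathcal{P}(\lambda)(k)=\mathrm{e}^{-\lambda}\lambda^k/k!$ on $\mathbb{N}$ for $\lambda>0$, and $\mathcal{P}(0)$ is the Dirac mass at $0$. $W_{1,\rho}(\mu,\nu)=\inf_\pi\int\!\!\int|x-y|\,\mathrm{d}\pi(x,y)$ over couplings $\pi$ of $\mu,\nu$. $H(\nu|\mu)=\int\log\frac{\mathrm{d}\nu}{\mathrm{d}\mu}\,\mathrm{d}\nu$ if $\nu\ll\mu$, $+\infty$ otherwise. $h(r)=(1+r)\log(1+r)-r$, $h_c(r)=c\,h(r/c)$ for $c>0$. *)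

theory Defs
  imports "HOL-Probability.Probability"
begin

text \<open>Poisson weight: P(lambda)(k) = exp(-lambda) lambda^k / k!.  Since 0^0 = 1,
  for lambda = 0 this is the Dirac mass at 0.\<close>
definition poisson_weight :: "real \<Rightarrow> nat \<Rightarrow> real" where
  "poisson_weight l k = exp (- l) * l ^ k / fact k"

text \<open>Couplings of two probability measures on the naturals (all such measures are pmfs).\<close>
definition couplings :: "nat pmf \<Rightarrow> nat pmf \<Rightarrow> (nat \<times> nat) pmf set" where
  "couplings \<nu> \<mu> = {\<pi>. map_pmf fst \<pi> = \<nu> \<and> map_pmf snd \<pi> = \<mu>}"

definition W1 :: "nat pmf \<Rightarrow> nat pmf \<Rightarrow> ennreal" where
  "W1 \<nu> \<mu> = (INF \<pi> \<in> couplings \<nu> \<mu>.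
      \<integral>\<^sup>+ xy. ennreal \<bar>real (fst xy) - real (snd xy)\<bar> \<partial>measure_pmf \<pi>)"

definition rel_entropy :: "nat pmf \<Rightarrow> nat pmf \<Rightarrow> ereal" where
  "rel_entropy \<nu> \<mu> =
     (if (\<forall>k. pmf \<mu> k = 0 \<longrightarrow> pmf \<nu> k = 0) then
        (let f = (\<lambda>k. ln (pmf \<nu> k / pmf \<mu> k)) in
          enn2ereal (\<integral>\<^sup>+ k. ennreal (f k) \<partial>measure_pmf \<nu>)
          - enn2ereal (\<integral>\<^sup>+ k. ennreal (- f k) \<partial>measure_pmf \<nu>))
      else \<infinity>)"

definition h_fun :: "real \<Rightarrow> real" where
  "h_fun r = (1 + r) * ln (1 + r) - r"

definition h_c :: "real \<Rightarrow> real \<Rightarrow> real" where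
  "h_c c r = c * h_fun (r / c)"

definition h_c_ext :: "real \<Rightarrow> ennreal \<Rightarrow> ereal" where
  "h_c_ext c w = (if w = \<infinity> then \<infinity> else ereal (h_c c (enn2real w)))"

end

theory Submission
  imports Defs
begin

(* Let mu = int P(l) sigma(dl) with sigma concentrated on [0,a] and c = a + a^2/4.  By the
   dual form of the inequality it suffices to show, for every bounded 1-Lipschitz f on the
   naturals and t >= 0, with psi t = e^t - 1 - t,
       E_mu exp (t f) <= exp (t E_mu f + c psi t).                                   (L)
   Write P_l f k = E f (k + N_l) with N_l ~ Poisson(l).  These operators form a semigroup
   preserving 1-Lipschitz functions; a second-order estimate for small times, iterated along
   the semigroup, gives P_l (exp (t f)) 0 <= exp (t P_l f 0 + l psi t).  As l -> P_l f 0 is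
   1-Lipschitz, Hoeffding's lemma in the mixing variable contributes t^2 a^2/8 <= (a^2/4) psi t,
   giving (L).  The Gibbs variational inequality turns (L), applied to the test function built
   from the signs of the cdf difference, into h_c (sum_{k<N} |F_nu k - F_mu k|) <= H(nu|mu);
   the quantile coupling shows W1 <= sum_k |F_nu k - F_mu k|, and letting N -> oo together with
   the monotonicity of h_c proves the theorem. *)

section \<open>Poisson laws and the Poisson semigroup on the naturals\<close>

text \<open>The Poisson law with parameter s; the library only covers positive rates, so rate 0
  (and, harmlessly, negative rates) give the Dirac mass at 0.\<close>
definition poisson_law :: "real \<Rightarrow> nat pmf" where
  "poisson_law s = (if 0 < s then poisson_pmf s else return_pmf 0)"

lemma pmf_poisson_law: "0 \<le> s \<Longrightarrow> pmf (poisson_law s) k = poisson_weight s k"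
proof (cases "s > 0")
  case True
  then show ?thesis by (simp add: poisson_law_def poisson_weight_def)
next
  case False
  assume "0 \<le> s"
  with False have "s = 0" by simp
  then show ?thesis by (cases k) (auto simp: poisson_law_def poisson_weight_def pmf_return)
qed

lemma poisson_law_max0: "poisson_law (max 0 s) = poisson_law s"
  by (simp add: poisson_law_def max_def)

lemma poisson_weight_nonneg: "0 \<le> s \<Longrightarrow> 0 \<le> poisson_weight s k"
  by (simp add: poisson_weight_def)

text \<open>Convolution identity of Poisson weights (binomial theorem).\<close>
lemma poisson_weight_convolution:
  assumes "0 \<le> a" "0 \<le> b"
  shows "(\<Sum>i\<le>m. poisson_weight a i * poisson_weight b (m - i)) = poisson_weight (a + b) m"
proof -
  have "poisson_weight (a + b) m
      = exp (-a) * exp (-b) * (\<Sum>i\<le>m. of_nat (m choose i) * a ^ i * b ^ (m - i)) / fact m"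
    by (simp add: poisson_weight_def binomial_ring exp_add[symmetric])
  also have "\<dots> = (\<Sum>i\<le>m. exp (-a) * exp (-b) * (of_nat (m choose i) / fact m) * a ^ i * b ^ (m - i))"
    by (simp add: sum_divide_distrib sum_distrib_left mult_ac)
  also have "\<dots> = (\<Sum>i\<le>m. poisson_weight a i * poisson_weight b (m - i))"
    by (rule sum.cong) (auto simp: binomial_fact poisson_weight_def field_simps)
  finally show ?thesis by simp
qed

lemma poisson_law_add:
  assumes "0 \<le> a" "0 \<le> b"
  shows "poisson_law (a + b) = bind_pmf (poisson_law a) (\<lambda>i. map_pmf ((+) i) (poisson_law b))"
proof (rule pmf_eqI)
  fix m
  have shifted: "pmf (map_pmf ((+) i) (poisson_law b)) m
      = (if i \<le> m then poisson_weight b (m - i) else 0)" for i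
  proof (cases "i \<le> m")
    case True
    have "pmf (map_pmf ((+) i) (poisson_law b)) (i + (m - i)) = pmf (poisson_law b) (m - i)"
      by (rule pmf_map_inj') (auto simp: inj_def)
    with True assms show ?thesis by (simp add: pmf_poisson_law)
  next
    case False
    then have "(+) i -` {m} = {}" by auto
    with False show ?thesis by (simp add: pmf_map)
  qed
  have "pmf (bind_pmf (poisson_law a) (\<lambda>i. map_pmf ((+) i) (poisson_law b))) m
      = (\<integral>i. (if i \<le> m then poisson_weight b (m - i) else 0) \<partial>measure_pmf (poisson_law a))"
    by (simp add: pmf_bind shifted)
  also have "\<dots> = (\<Sum>i\<in>{..m}. (if i \<le> m then poisson_weight b (m - i) else 0) * pmf (poisson_law a) i)"
    by (rule integral_measure_pmf_real) (auto split: if_splits)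
  also have "\<dots> = (\<Sum>i\<le>m. poisson_weight a i * poisson_weight b (m - i))"
    using assms by (intro sum.cong) (auto simp: pmf_poisson_law)
  also have "\<dots> = pmf (poisson_law (a + b)) m"
    using assms by (simp add: poisson_weight_convolution pmf_poisson_law)
  finally show "pmf (poisson_law (a + b)) m
      = pmf (bind_pmf (poisson_law a) (\<lambda>i. map_pmf ((+) i) (poisson_law b))) m" by simp
qed

lemma has_bochner_integral_poisson_law:
  assumes s: "0 \<le> s" and F: "\<And>j. 0 \<le> F j" and S: "(\<lambda>j. poisson_weight s j * F j) sums S"
  shows "has_bochner_integral (measure_pmf (poisson_law s)) F S"
proof (rule has_bochner_integral_nn_integral)
  have nn: "0 \<le> poisson_weight s j * F j" for j using s F by (simp add: poisson_weight_nonneg)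
  show "0 \<le> S" using sums_le[OF _ sums_zero S] nn by auto
  have "(\<integral>\<^sup>+ j. ennreal (F j) \<partial>measure_pmf (poisson_law s)) = (\<Sum>j. ennreal (poisson_weight s j * F j))"
    by (simp add: nn_integral_measure_pmf nn_integral_count_space_nat pmf_poisson_law s F
        poisson_weight_nonneg ennreal_mult)
  also have "\<dots> = ennreal S" by (rule suminf_ennreal_eq[OF nn S])
  finally show "(\<integral>\<^sup>+ j. ennreal (F j) \<partial>measure_pmf (poisson_law s)) = ennreal S" .
qed (use F in auto)

lemma poisson_weight_sums: "0 \<le> s \<Longrightarrow> (\<lambda>j. poisson_weight s j) sums 1"
proof -
  have "(\<lambda>j. exp (-s) * (s ^ j /\<^sub>R fact j)) sums (exp (-s) * exp s)"
    by (intro sums_mult exp_converges)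
  then show ?thesis by (simp add: poisson_weight_def field_simps flip: exp_add)
qed

lemma poisson_law_mean:
  assumes s: "0 \<le> s"
  shows "has_bochner_integral (measure_pmf (poisson_law s)) (\<lambda>j. real j) s"
proof (rule has_bochner_integral_poisson_law[OF s])
  have "(\<lambda>j. s * poisson_weight s j) sums (s * 1)"
    by (rule sums_mult[OF poisson_weight_sums[OF s]])
  moreover have "s * poisson_weight s j = poisson_weight s (Suc j) * real (Suc j)" for j
  proof -
    have "fact (Suc j) = real (Suc j) * (fact j :: real)" by simp
    moreover have "(fact j :: real) > 0" by simp
    ultimately show ?thesis by (simp add: poisson_weight_def field_simps del: of_nat_Suc)
  qed
  ultimately have "(\<lambda>j. poisson_weight s (Suc j) * real (Suc j)) sums s" by simp
  then show "(\<lambda>j. poisson_weight s j * real j) sums s"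
    by (subst (asm) sums_Suc_iff) simp
qed auto

text \<open>Tail estimate: for s \<le> 1 the exponential moment of a Poisson(s) variable beyond 2
  is of order s^2; this is what makes the short-time expansion second-order.\<close>
lemma poisson_law_tail:
  assumes s: "0 \<le> s" "s \<le> 1" and z: "0 \<le> z"
  shows "integrable (measure_pmf (poisson_law s)) (\<lambda>j. if 2 \<le> j then z ^ j else 0)"
    and "measure_pmf.expectation (poisson_law s) (\<lambda>j. if 2 \<le> j then z ^ j else 0) \<le> s\<^sup>2 * z\<^sup>2 * exp z"
proof -
  define G where "G j = (if 2 \<le> j then z ^ (j - 2) / fact (j - 2) else 0)" for j
  define T where "T j = poisson_weight s j * (if 2 \<le> j then z ^ j else 0)" for j
  have G_sums: "G sums exp z"
  proof -
    have "(\<lambda>j. G (Suc (Suc j))) sums exp z"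
      using exp_converges[of z] by (simp add: G_def divide_inverse mult.commute)
    then have "(\<lambda>j. G (Suc j)) sums exp z" by (subst (asm) sums_Suc_iff) (simp add: G_def)
    then show ?thesis by (subst (asm) sums_Suc_iff) (simp add: G_def)
  qed
  have T_nonneg: "0 \<le> T j" for j using s z by (simp add: T_def poisson_weight_nonneg)
  have T_le: "T j \<le> s\<^sup>2 * z\<^sup>2 * G j" for j
  proof (cases "2 \<le> j")
    case True
    then obtain i where j: "j = i + 2" by (metis add.commute le_Suc_ex)
    have "T j = exp (-s) * (s ^ i * s\<^sup>2) * (z ^ i * z\<^sup>2) / fact (i + 2)"
      using j by (simp add: T_def poisson_weight_def power_add power_mult_distrib power2_eq_square)
    also have "\<dots> \<le> 1 * (1 * s\<^sup>2) * (z ^ i * z\<^sup>2) / fact i"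
    proof (intro frac_le mult_mono)
      show "fact i \<le> (fact (i + 2) :: real)" by (intro fact_mono) simp
      show "s ^ i \<le> 1" using s by (simp add: power_le_one)
      show "exp (-s) \<le> 1" using s by simp
    qed (use s z in auto)
    also have "\<dots> = s\<^sup>2 * z\<^sup>2 * G j" using j by (simp add: G_def power2_eq_square)
    finally show ?thesis .
  qed (simp add: T_def G_def)
  have T_summable: "summable T"
    by (rule summable_comparison_test[of _ "\<lambda>j. s\<^sup>2 * z\<^sup>2 * G j"])
       (use T_nonneg T_le G_sums in \<open>auto intro!: summable_mult sums_summable\<close>)
  have "suminf T \<le> (\<Sum>j. s\<^sup>2 * z\<^sup>2 * G j)"
    by (intro suminf_le T_le T_summable summable_mult sums_summable[OF G_sums])
  also have "\<dots> = s\<^sup>2 * z\<^sup>2 * exp z"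
    using G_sums by (simp add: suminf_mult sums_unique[symmetric] sums_summable[OF G_sums])
  finally have le: "suminf T \<le> s\<^sup>2 * z\<^sup>2 * exp z" .
  have hb: "has_bochner_integral (measure_pmf (poisson_law s)) (\<lambda>j. if 2 \<le> j then z ^ j else 0) (suminf T)"
    by (rule has_bochner_integral_poisson_law)
       (use s z T_summable in \<open>auto simp: summable_sums[of T, unfolded T_def[abs_def]] T_def[abs_def]\<close>)
  then show "integrable (measure_pmf (poisson_law s)) (\<lambda>j. if 2 \<le> j then z ^ j else 0)"
    by (auto simp: has_bochner_integral_iff)
  show "measure_pmf.expectation (poisson_law s) (\<lambda>j. if 2 \<le> j then z ^ j else 0) \<le> s\<^sup>2 * z\<^sup>2 * exp z"
    using hb le by (simp add: has_bochner_integral_integral_eq)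
qed

text \<open>Test functions are bounded sequences (library notion Bseq), so all their Poisson
  expectations exist.\<close>
lemma Bseq_realE:
  fixes g :: "nat \<Rightarrow> real"
  assumes "Bseq g" obtains B where "\<And>k. \<bar>g k\<bar> \<le> B"
  using assms that unfolding Bseq_def real_norm_def by auto

lemma Bseq_integrable_pmf_comp: "Bseq (g :: nat \<Rightarrow> real) \<Longrightarrow> integrable (measure_pmf p) (\<lambda>j. g (h j))"
proof -
  assume "Bseq g"
  then obtain B where "\<And>k. \<bar>g k\<bar> \<le> B" by (metis Bseq_realE)
  then show ?thesis by (intro measure_pmf.integrable_const_bound[where B = B]) auto
qed

lemma Bseq_integrable_pmf: "Bseq (g :: nat \<Rightarrow> real) \<Longrightarrow> integrable (measure_pmf p) g"
  using Bseq_integrable_pmf_comp[of g p "\<lambda>j. j"] by simp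

lemma Bseq_add_fun: "Bseq f \<Longrightarrow> Bseq g \<Longrightarrow> Bseq (\<lambda>k. f k + g k :: real)"
proof -
  assume "Bseq f" "Bseq g"
  then obtain K L where "\<And>k. \<bar>f k\<bar> \<le> K" "\<And>k. \<bar>g k\<bar> \<le> L" by (metis Bseq_realE)
  then have "\<bar>f k + g k\<bar> \<le> K + L" for k by (meson abs_triangle_ineq add_mono order_trans)
  then show ?thesis by (intro BseqI'[where K = "K + L"]) simp
qed

lemma Bseq_cmult: "Bseq f \<Longrightarrow> Bseq (\<lambda>k. c * f k :: real)"
  by (rule Bseq_mult[OF Bfun_const])

lemma Bseq_diff_fun: "Bseq f \<Longrightarrow> Bseq g \<Longrightarrow> Bseq (\<lambda>k. f k - g k :: real)"
  using Bseq_add_fun[of f "\<lambda>k. -1 * g k"] Bseq_cmult[of g "-1"] by simp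

lemma Bseq_exp: "Bseq f \<Longrightarrow> Bseq (\<lambda>k. exp (f k :: real))"
proof -
  assume "Bseq f"
  then obtain K where "\<And>k. \<bar>f k\<bar> \<le> K" by (metis Bseq_realE)
  then have "\<bar>exp (f k)\<bar> \<le> exp K" for k by (simp add: abs_le_iff)
  then show ?thesis by (intro BseqI'[where K = "exp K"]) simp
qed

definition lip1 :: "(nat \<Rightarrow> real) \<Rightarrow> bool" where
  "lip1 g \<longleftrightarrow> (\<forall>k. \<bar>g (Suc k) - g k\<bar> \<le> 1)"

lemma lip1_bound: "lip1 g \<Longrightarrow> \<bar>g (k + j) - g k\<bar> \<le> real j"
proof (induction j)
  case (Suc j)
  have "\<bar>g (Suc (k + j)) - g (k + j)\<bar> \<le> 1" using Suc.prems by (simp add: lip1_def)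
  with Suc show ?case by simp
qed simp

definition lipschitz_nat :: "real \<Rightarrow> (nat \<Rightarrow> real) \<Rightarrow> bool" where
  "lipschitz_nat K g \<longleftrightarrow> 0 \<le> K \<and> (\<forall>k j. \<bar>g (k + j) - g k\<bar> \<le> K * real j)"

lemma lipschitz_nat_lip1: "lip1 f \<Longrightarrow> lipschitz_nat 1 f"
  unfolding lipschitz_nat_def using lip1_bound by auto

lemma lipschitz_nat_bounded:
  assumes "\<And>k. \<bar>g k\<bar> \<le> B" shows "lipschitz_nat (2 * B) g"
  unfolding lipschitz_nat_def
proof safe
  show "0 \<le> 2 * B" using assms[of 0] by simp
  fix k j
  show "\<bar>g (k + j) - g k\<bar> \<le> 2 * B * real j"
  proof (cases j)
    case (Suc i)
    have "\<bar>g (k + j) - g k\<bar> \<le> 2 * B" using assms[of "k + j"] assms[of k] by linarith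
    also have "\<dots> \<le> 2 * B * real j" using Suc assms[of 0] by (simp add: distrib_left)
    finally show ?thesis .
  qed simp
qed

lemma Bseq_lipschitz_nat: "Bseq g \<Longrightarrow> \<exists>K. lipschitz_nat K g"
  by (metis Bseq_realE lipschitz_nat_bounded)

section \<open>The Poisson semigroup\<close>

definition poisson_op :: "real \<Rightarrow> (nat \<Rightarrow> real) \<Rightarrow> nat \<Rightarrow> real" where
  "poisson_op s g k = measure_pmf.expectation (poisson_law s) (\<lambda>j. g (k + j))"

lemma poisson_op_zero [simp]: "poisson_op 0 g k = g k"
  by (simp add: poisson_op_def poisson_law_def)

lemma poisson_op_const [simp]: "poisson_op s (\<lambda>_. c) k = c"
  by (simp add: poisson_op_def)

lemma poisson_op_max0: "poisson_op (max 0 s) g k = poisson_op s g k"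
  by (simp add: poisson_op_def poisson_law_max0)

lemma poisson_op_mono:
  "Bseq f \<Longrightarrow> Bseq g \<Longrightarrow> (\<And>k. f k \<le> g k) \<Longrightarrow> poisson_op s f k \<le> poisson_op s g k"
  unfolding poisson_op_def by (intro integral_mono Bseq_integrable_pmf_comp) auto

lemma poisson_op_add:
  "Bseq f \<Longrightarrow> Bseq g \<Longrightarrow> poisson_op s (\<lambda>k. f k + g k) k = poisson_op s f k + poisson_op s g k"
  unfolding poisson_op_def by (intro Bochner_Integration.integral_add Bseq_integrable_pmf_comp)

lemma poisson_op_diff:
  "Bseq f \<Longrightarrow> Bseq g \<Longrightarrow> poisson_op s (\<lambda>k. f k - g k) k = poisson_op s f k - poisson_op s g k"
  unfolding poisson_op_def by (intro Bochner_Integration.integral_diff Bseq_integrable_pmf_comp)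

lemma poisson_op_cmult: "poisson_op s (\<lambda>k. c * f k) k = c * poisson_op s f k"
  unfolding poisson_op_def by simp

lemma poisson_op_bound: "(\<And>k. \<bar>g k\<bar> \<le> B) \<Longrightarrow> \<bar>poisson_op s g k\<bar> \<le> B"
proof -
  assume B: "\<And>k. \<bar>g k\<bar> \<le> B"
  then have g: "Bseq g" by (intro BseqI') simp
  have "poisson_op s g k \<le> poisson_op s (\<lambda>_. B) k"
    by (rule poisson_op_mono) (use g B abs_le_D1 in auto)
  moreover have "\<And>k. -B \<le> g k" using B by (metis abs_le_D2 minus_le_iff)
  then have "poisson_op s (\<lambda>_. -B) k \<le> poisson_op s g k"
    by (intro poisson_op_mono g) auto
  ultimately show ?thesis by simp
qed

lemma Bseq_poisson_op: "Bseq g \<Longrightarrow> Bseq (poisson_op s g)"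
proof -
  assume "Bseq g"
  then obtain B where "\<And>k. \<bar>g k\<bar> \<le> B" by (metis Bseq_realE)
  then show ?thesis by (intro BseqI'[where K = B]) (simp add: poisson_op_bound)
qed

text \<open>Semigroup property P_(a+b) = P_a P_b, from the convolution of Poisson laws.\<close>
lemma poisson_op_semigroup:
  assumes "0 \<le> a" "0 \<le> b" "Bseq g"
  shows "poisson_op (a + b) g k = poisson_op a (poisson_op b g) k"
proof -
  obtain B where B: "\<And>k. \<bar>g k\<bar> \<le> B" using assms(3) by (metis Bseq_realE)
  have "poisson_op (a + b) g k = measure_pmf.expectation
      (bind_pmf (poisson_law a) (\<lambda>i. map_pmf ((+) i) (poisson_law b))) (\<lambda>j. g (k + j))"
    unfolding poisson_op_def poisson_law_add[OF assms(1,2)] ..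
  also have "\<dots> = (\<integral>i. measure_pmf.expectation (map_pmf ((+) i) (poisson_law b)) (\<lambda>j. g (k + j))
      \<partial>poisson_law a)"
    unfolding measure_pmf_bind
    by (rule integral_bind[where K = "count_space UNIV" and B = B and B' = 1])
       (use B measure_pmf_in_subprob_algebra in auto)
  also have "\<dots> = (\<integral>i. poisson_op b g (k + i) \<partial>poisson_law a)"
    by (simp add: poisson_op_def add.assoc)
  finally show ?thesis by (simp add: poisson_op_def)
qed

text \<open>P_s commutes with discrete differences, hence preserves unit Lipschitz functions.\<close>
lemma lip1_poisson_op:
  assumes "lip1 g" "Bseq g" shows "lip1 (poisson_op s g)"
  unfolding lip1_def
proof
  fix k
  have "poisson_op s g (Suc k) - poisson_op s g k = poisson_op s (\<lambda>j. g (Suc j) - g j) k"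
    unfolding poisson_op_def
    by (subst Bochner_Integration.integral_diff[symmetric]) (auto intro!: Bseq_integrable_pmf_comp assms)
  also have "\<bar>\<dots>\<bar> \<le> 1" by (rule poisson_op_bound) (use assms(1) in \<open>auto simp: lip1_def\<close>)
  finally show "\<bar>poisson_op s g (Suc k) - poisson_op s g k\<bar> \<le> 1" .
qed

text \<open>For a K-Lipschitz g, P_d g stays within K d of g (the mean of Poisson(d) is d) ...\<close>
lemma poisson_op_near:
  assumes "lipschitz_nat K g" "Bseq g" "0 \<le> d"
  shows "\<bar>poisson_op d g k - g k\<bar> \<le> K * d"
proof -
  have mean: "integrable (measure_pmf (poisson_law d)) (\<lambda>j. real j)"
    "measure_pmf.expectation (poisson_law d) (\<lambda>j. real j) = d"
    using poisson_law_mean[OF assms(3)] by (auto simp: has_bochner_integral_iff)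
  have "poisson_op d g k - g k = measure_pmf.expectation (poisson_law d) (\<lambda>j. g (k + j) - g k)"
    unfolding poisson_op_def
    by (subst Bochner_Integration.integral_diff) (auto intro!: Bseq_integrable_pmf_comp assms(2))
  also have "\<bar>\<dots>\<bar> \<le> measure_pmf.expectation (poisson_law d) (\<lambda>j. \<bar>g (k + j) - g k\<bar>)"
    by (rule integral_abs_bound)
  also have "\<dots> \<le> measure_pmf.expectation (poisson_law d) (\<lambda>j. K * real j)"
    using assms(1) unfolding lipschitz_nat_def
    by (intro integral_mono integrable_abs Bochner_Integration.integrable_diff
        Bseq_integrable_pmf_comp assms(2) integrable_mult_right mean(1)) auto
  also have "\<dots> = K * d" using mean(2) by simp
  finally show ?thesis .
qed

text \<open>... hence, by the semigroup property, s \<mapsto> P_s g k is K-Lipschitz.\<close>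
lemma poisson_op_param_lipschitz:
  assumes "lipschitz_nat K g" "Bseq g"
  shows "\<bar>poisson_op x g k - poisson_op y g k\<bar> \<le> K * \<bar>x - y\<bar>"
proof -
  have ordered: "\<bar>poisson_op q g k - poisson_op p g k\<bar> \<le> K * (q - p)" if "0 \<le> p" "p \<le> q" for p q
  proof -
    have "poisson_op q g k = poisson_op p (poisson_op (q - p) g) k"
      using poisson_op_semigroup[of p "q - p" g k] that assms(2) by simp
    then have "poisson_op q g k - poisson_op p g k = poisson_op p (\<lambda>i. poisson_op (q - p) g i - g i) k"
      by (simp add: poisson_op_diff Bseq_poisson_op assms(2))
    also have "\<bar>\<dots>\<bar> \<le> K * (q - p)"
      by (rule poisson_op_bound) (use poisson_op_near[OF assms] that in auto)
    finally show ?thesis .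
  qed
  have K: "0 \<le> K" using assms(1) by (simp add: lipschitz_nat_def)
  have "\<bar>poisson_op (max 0 x) g k - poisson_op (max 0 y) g k\<bar> \<le> K * \<bar>max 0 x - max 0 y\<bar>"
  proof (cases "max 0 y \<le> max 0 x")
    case True
    then show ?thesis using ordered[of "max 0 y" "max 0 x"] by simp
  next
    case False
    then have "\<bar>poisson_op (max 0 y) g k - poisson_op (max 0 x) g k\<bar> \<le> K * (max 0 y - max 0 x)"
      by (intro ordered) auto
    with False show ?thesis by (simp add: abs_minus_commute)
  qed
  also have "\<dots> \<le> K * \<bar>x - y\<bar>" using K by (intro mult_left_mono) auto
  finally show ?thesis by (simp add: poisson_op_max0)
qed

lemma poisson_op_param_continuous:
  assumes "lipschitz_nat K g" "Bseq g"
  shows "continuous_on S (\<lambda>l. poisson_op l g k)"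
proof -
  have "K-lipschitz_on S (\<lambda>l. poisson_op l g k)"
    by (rule lipschitz_onI)
       (use poisson_op_param_lipschitz[OF assms] assms(1) in \<open>auto simp: dist_real_def lipschitz_nat_def\<close>)
  then show ?thesis by (rule lipschitz_on_continuous_on)
qed

lemma poisson_op_param_measurable:
  assumes "Bseq g"
  shows "(\<lambda>l. poisson_op l g k) \<in> borel_measurable borel"
  using Bseq_lipschitz_nat[OF assms]
  by (auto intro!: borel_measurable_continuous_onI poisson_op_param_continuous assms)

section \<open>Exponential bounds for the Poisson semigroup\<close>

text \<open>psi t = e^t - 1 - t is the cumulant generating function of a centred Poisson(1)
  variable; it controls the exponential moments below.\<close>
definition psi :: "real \<Rightarrow> real" where
  "psi t = exp t - 1 - t"

lemma psi_nonneg: "0 \<le> psi t"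
  using exp_ge_add_one_self[of t] unfolding psi_def by linarith

lemma psi_mono: "0 \<le> x \<Longrightarrow> x \<le> t \<Longrightarrow> psi x \<le> psi t"
proof -
  assume "0 \<le> x" "x \<le> t"
  have split: "exp t = exp x * exp (t - x)" by (simp flip: exp_add)
  have "t - x \<le> exp (t - x) - 1" using exp_ge_add_one_self[of "t - x"] by linarith
  then have "1 * (t - x) \<le> exp x * (exp (t - x) - 1)"
    using \<open>0 \<le> x\<close> \<open>x \<le> t\<close> by (intro mult_mono) auto
  also have "\<dots> = exp t - exp x" using split by (simp add: algebra_simps)
  finally show ?thesis unfolding psi_def by simp
qed

text \<open>sinh y \<ge> y for y \<ge> 0, i.e. psi (-y) \<le> psi y.\<close>
lemma sinh_lower: "0 \<le> (y::real) \<Longrightarrow> 2 * y \<le> exp y - exp (- y)"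
proof -
  assume y: "0 \<le> y"
  have "(\<lambda>y. exp y - exp (- y) - 2 * y) 0 \<le> (\<lambda>y. exp y - exp (- y) - 2 * y) y"
  proof (rule DERIV_nonneg_imp_nondecreasing[OF y])
    fix x :: real
    have d: "((\<lambda>y. exp y - exp (- y) - 2 * y) has_real_derivative (exp x + exp (- x) - 2)) (at x)"
      by (auto intro!: derivative_eq_intros)
    have "exp x + exp (- x) - 2 = (exp (x/2) - exp (-x/2))\<^sup>2"
      by (simp add: power2_eq_square algebra_simps flip: exp_add)
    with d show "\<exists>y. ((\<lambda>y. exp y - exp (- y) - 2 * y) has_real_derivative y) (at x) \<and> 0 \<le> y"
      by (metis zero_le_power2)
  qed
  then show ?thesis by simp
qed

lemma psi_abs_le: assumes "\<bar>x\<bar> \<le> t" shows "psi x \<le> psi t"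
proof (cases "0 \<le> x")
  case True
  then show ?thesis using assms psi_mono by simp
next
  case False
  then have "psi x \<le> psi (- x)" using sinh_lower[of "-x"] by (simp add: psi_def)
  also have "\<dots> \<le> psi t" using False assms by (intro psi_mono) auto
  finally show ?thesis .
qed

lemma psi_quadratic_lower: "0 \<le> t \<Longrightarrow> t\<^sup>2 / 2 \<le> psi t"
  using exp_lower_Taylor_quadratic[of t] by (simp add: psi_def)

text \<open>Second-order upper bound for the exponential moment of an increment h of a unit
  Lipschitz function after a Poisson(e) jump: only jumps of size 1 matter to first order.\<close>
lemma poisson_exp_increment_upper:
  fixes h :: "nat \<Rightarrow> real"
  assumes h: "\<And>j. \<bar>h j\<bar> \<le> real j" and bh: "Bseq h" and t: "0 \<le> t" and e: "0 < e" "e \<le> 1"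
  shows "measure_pmf.expectation (poisson_law e) (\<lambda>j. exp (t * h j))
    \<le> exp (-e) + exp (t * h 1) * (e * exp (-e)) + e\<^sup>2 * ((exp t)\<^sup>2 * exp (exp t))"
proof -
  let ?E = "measure_pmf.expectation (poisson_law e)"
  define tail :: "nat \<Rightarrow> real" where "tail j = (if 2 \<le> j then exp t ^ j else 0)" for j
  have tail: "integrable (measure_pmf (poisson_law e)) tail" "?E tail \<le> e\<^sup>2 * (exp t)\<^sup>2 * exp (exp t)"
    using poisson_law_tail[of e "exp t"] e unfolding tail_def[abs_def] by auto
  have ind: "integrable (measure_pmf (poisson_law e)) (indicator {n} :: nat \<Rightarrow> real)" for n
    by (rule measure_pmf.integrable_const_bound[where B = 1]) auto
  have pointwise: "exp (t * h j) \<le> indicator {0} j + exp (t * h 1) * indicator {1} j + tail j" for j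
  proof -
    consider "j = 0" | "j = 1" | "2 \<le> j" by linarith
    then show ?thesis
    proof cases
      case 1
      then show ?thesis using h[of 0] by (simp add: tail_def)
    next
      case 2
      then show ?thesis by (simp add: tail_def)
    next
      case 3
      have "h j \<le> real j" using h[of j] by (simp add: abs_le_iff)
      then have "t * h j \<le> real j * t" using t by (simp add: mult.commute mult_left_mono)
      then have "exp (t * h j) \<le> exp t ^ j" by (simp flip: exp_of_nat_mult)
      with 3 show ?thesis by (simp add: tail_def)
    qed
  qed
  have "?E (\<lambda>j. exp (t * h j)) \<le> ?E (\<lambda>j. indicator {0} j + exp (t * h 1) * indicator {1} j + tail j)"
    by (intro integral_mono pointwise Bseq_integrable_pmf Bseq_exp Bseq_cmult bh
        Bochner_Integration.integrable_add integrable_mult_right tail(1) ind)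
  also have "\<dots> = ?E (indicator {0}) + exp (t * h 1) * ?E (indicator {1}) + ?E tail"
    using ind tail(1) by (simp add: Bochner_Integration.integral_add)
  also have "\<dots> \<le> exp (-e) + exp (t * h 1) * (e * exp (-e)) + e\<^sup>2 * ((exp t)\<^sup>2 * exp (exp t))"
    using tail(2) e by (simp add: measure_pmf_single pmf_poisson_law poisson_weight_def mult_ac)
  finally show ?thesis .
qed

lemma poisson_increment_lower:
  fixes h :: "nat \<Rightarrow> real"
  assumes h: "\<And>j. \<bar>h j\<bar> \<le> real j" and bh: "Bseq h" and e: "0 < e" "e \<le> 1"
  shows "h 1 * (e * exp (-e)) - e\<^sup>2 * ((exp 1)\<^sup>2 * exp (exp 1)) \<le> measure_pmf.expectation (poisson_law e) h"
proof -
  let ?E = "measure_pmf.expectation (poisson_law e)"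
  define tail :: "nat \<Rightarrow> real" where "tail j = (if 2 \<le> j then exp 1 ^ j else 0)" for j
  have tail: "integrable (measure_pmf (poisson_law e)) tail" "?E tail \<le> e\<^sup>2 * (exp 1)\<^sup>2 * exp (exp 1)"
    using poisson_law_tail[of e "exp 1"] e unfolding tail_def[abs_def] by auto
  have ind: "integrable (measure_pmf (poisson_law e)) (indicator {1} :: nat \<Rightarrow> real)"
    by (rule measure_pmf.integrable_const_bound[where B = 1]) auto
  have pointwise: "h 1 * indicator {1} j - tail j \<le> h j" for j
  proof -
    consider "j = 0" | "j = 1" | "2 \<le> j" by linarith
    then show ?thesis
    proof cases
      case 1
      then show ?thesis using h[of 0] by (simp add: tail_def)
    next
      case 2
      then show ?thesis by (simp add: tail_def)
    next
      case 3
      have "real j \<le> exp (real j)" using exp_ge_add_one_self[of "real j"] by linarith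
      also have "\<dots> = exp 1 ^ j" using exp_of_nat_mult[of j 1] by simp
      finally have "- (exp 1 ^ j) \<le> h j" using h[of j] by linarith
      with 3 show ?thesis by (simp add: tail_def)
    qed
  qed
  have "h 1 * (e * exp (-e)) - e\<^sup>2 * ((exp 1)\<^sup>2 * exp (exp 1)) \<le> h 1 * ?E (indicator {1}) - ?E tail"
    using tail(2) e by (simp add: measure_pmf_single pmf_poisson_law poisson_weight_def mult_ac)
  also have "\<dots> = ?E (\<lambda>j. h 1 * indicator {1} j - tail j)"
    using tail(1) ind by (simp add: Bochner_Integration.integral_diff)
  also have "\<dots> \<le> ?E h"
    by (intro integral_mono pointwise Bseq_integrable_pmf bh Bochner_Integration.integrable_diff
        integrable_mult_right tail(1) ind)
  finally show ?thesis .
qed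

text \<open>The scalar inequality combining the two bounds above: with c = h 1, A the exponential
  moment and Eh the mean increment, A \<le> exp (t Eh + e psi t + O(e^2)).\<close>
lemma short_time_exp_arith:
  fixes t e c A Eh K1 K2 :: real
  assumes t: "0 \<le> t" and e: "0 < e" "e \<le> 1" and c: "\<bar>c\<bar> \<le> 1"
    and K1: "0 \<le> K1" and K2: "0 \<le> K2"
    and A: "A \<le> exp (-e) + exp (t * c) * (e * exp (-e)) + e\<^sup>2 * K1"
    and Eh: "c * (e * exp (-e)) - e\<^sup>2 * K2 \<le> Eh"
  shows "A \<le> exp (t * Eh + e * psi t + (t + exp 1 * K1 + t * K2) * e\<^sup>2)"
proof -
  define E0 where "E0 = exp (e * (exp (t * c) - 1))"
  have first_order: "exp (-e) + exp (t * c) * (e * exp (-e)) \<le> E0"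
  proof -
    have "exp (-e) + exp (t * c) * (e * exp (-e)) = exp (-e) * (1 + e * exp (t * c))"
      by (simp add: algebra_simps)
    also have "\<dots> \<le> exp (-e) * exp (e * exp (t * c))"
      by (intro mult_left_mono exp_ge_add_one_self) auto
    also have "\<dots> = E0" by (simp add: E0_def algebra_simps flip: exp_add)
    finally show ?thesis .
  qed
  have E0_lower: "1 \<le> exp 1 * E0"
  proof -
    have "e * (-1) \<le> e * (exp (t * c) - 1)" using e by (intro mult_left_mono) auto
    then have "exp (-1) \<le> E0" using e unfolding E0_def by simp
    then show ?thesis by (simp add: exp_minus field_simps)
  qed
  have "A \<le> E0 + E0 * (exp 1 * e\<^sup>2 * K1)"
    using A first_order mult_right_mono[OF E0_lower, of "e\<^sup>2 * K1"] K1 by (simp add: algebra_simps)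
  also have "\<dots> = E0 * (1 + exp 1 * e\<^sup>2 * K1)" by (simp add: algebra_simps)
  also have "\<dots> \<le> E0 * exp (exp 1 * e\<^sup>2 * K1)"
    by (intro mult_left_mono exp_ge_add_one_self) (simp add: E0_def)
  also have "\<dots> = exp (e * (exp (t * c) - 1) + exp 1 * e\<^sup>2 * K1)" by (simp add: E0_def flip: exp_add)
  also have "\<dots> \<le> exp (t * Eh + e * psi t + (t + exp 1 * K1 + t * K2) * e\<^sup>2)"
  proof (subst exp_le_cancel_iff)
    have "\<bar>t * c\<bar> \<le> t" using t c by (simp add: abs_mult mult_left_le)
    then have "e * psi (t * c) \<le> e * psi t" using e psi_abs_le by (simp add: less_imp_le)
    then have s4: "e * (exp (t * c) - 1) \<le> e * (t * c) + e * psi t" by (simp add: psi_def algebra_simps)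
    have "0 \<le> 1 - exp (-e)" "1 - exp (-e) \<le> e"
      using e exp_ge_add_one_self[of "-e"] by auto
    then have "\<bar>c * (1 - exp (-e))\<bar> \<le> 1 * e"
      unfolding abs_mult using c by (intro mult_mono) auto
    then have "(t * e) * (c * (1 - exp (-e))) \<le> (t * e) * e" using t e by (intro mult_left_mono) auto
    then have s5: "e * (t * c) \<le> t * (c * (e * exp (-e))) + t * e\<^sup>2"
      by (simp add: algebra_simps power2_eq_square)
    have s6: "t * (c * (e * exp (-e))) - t * (e\<^sup>2 * K2) \<le> t * Eh"
      using mult_left_mono[OF Eh t] by (simp add: algebra_simps)
    show "e * (exp (t * c) - 1) + exp 1 * e\<^sup>2 * K1 \<le> t * Eh + e * psi t + (t + exp 1 * K1 + t * K2) * e\<^sup>2"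
      using s4 s5 s6 by (simp add: algebra_simps)
  qed
  finally show ?thesis .
qed

definition short_time_const :: "real \<Rightarrow> real" where
  "short_time_const t = t + exp 1 * ((exp t)\<^sup>2 * exp (exp t)) + t * ((exp 1)\<^sup>2 * exp (exp 1))"

lemma poisson_op_exp_short_time:
  fixes g :: "nat \<Rightarrow> real"
  assumes lip: "lip1 g" and bg: "Bseq g" and t: "0 \<le> t" and e: "0 < e" "e \<le> 1"
  shows "poisson_op e (\<lambda>k. exp (t * g k)) k \<le> exp (t * poisson_op e g k + e * psi t + short_time_const t * e\<^sup>2)"
proof -
  define h where "h j = g (k + j) - g k" for j
  let ?E = "measure_pmf.expectation (poisson_law e)"
  have h: "\<bar>h j\<bar> \<le> real j" for j unfolding h_def by (rule lip1_bound[OF lip])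
  have bh: "Bseq h" unfolding h_def by (intro Bseq_diff_fun Bfun_const Bseq_subseq[OF bg])
  have increment: "?E (\<lambda>j. exp (t * h j)) \<le> exp (t * ?E h + e * psi t + short_time_const t * e\<^sup>2)"
    unfolding short_time_const_def
    by (rule short_time_exp_arith[OF t e _ _ _ poisson_exp_increment_upper[OF h bh t e]
          poisson_increment_lower[OF h bh e]]) (use h[of 1] in auto)
  have "(\<lambda>j. exp (t * g (k + j))) = (\<lambda>j. exp (t * g k) * exp (t * h j))"
    unfolding h_def by (simp add: algebra_simps flip: exp_add)
  then have "poisson_op e (\<lambda>k. exp (t * g k)) k = exp (t * g k) * ?E (\<lambda>j. exp (t * h j))"
    unfolding poisson_op_def by simp
  also have "\<dots> \<le> exp (t * g k) * exp (t * ?E h + e * psi t + short_time_const t * e\<^sup>2)"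
    by (intro mult_left_mono increment) simp
  also have "?E h = poisson_op e g k - g k"
    unfolding h_def poisson_op_def
    by (subst Bochner_Integration.integral_diff) (auto intro!: Bseq_integrable_pmf_comp bg)
  finally show ?thesis by (simp add: algebra_simps flip: exp_add)
qed

lemma poisson_op_exp_iterated:
  assumes t: "0 \<le> t" and e: "0 < e" "e \<le> 1"
  shows "lip1 f \<Longrightarrow> Bseq f \<Longrightarrow> poisson_op (real n * e) (\<lambda>k. exp (t * f k)) 0
    \<le> exp (real n * (e * psi t + short_time_const t * e\<^sup>2)) * exp (t * poisson_op (real n * e) f 0)"
proof (induction n arbitrary: f)
  case 0
  then show ?case by simp
next
  case (Suc n)
  define D where "D = e * psi t + short_time_const t * e\<^sup>2"
  have n0: "0 \<le> real n * e" using e by simp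
  have bexp: "Bseq (\<lambda>k. exp (t * f k))" by (intro Bseq_exp Bseq_cmult Suc.prems)
  have "poisson_op (real (Suc n) * e) (\<lambda>k. exp (t * f k)) 0
      = poisson_op (real n * e) (poisson_op e (\<lambda>k. exp (t * f k))) 0"
    using poisson_op_semigroup[OF n0 _ bexp, of e 0] e by (simp add: algebra_simps)
  also have "\<dots> \<le> poisson_op (real n * e) (\<lambda>k. exp D * exp (t * poisson_op e f k)) 0"
  proof (rule poisson_op_mono)
    show "Bseq (poisson_op e (\<lambda>k. exp (t * f k)))" by (rule Bseq_poisson_op[OF bexp])
    show "Bseq (\<lambda>k. exp D * exp (t * poisson_op e f k))"
      by (intro Bseq_cmult Bseq_exp Bseq_poisson_op Suc.prems)
    show "poisson_op e (\<lambda>k. exp (t * f k)) k \<le> exp D * exp (t * poisson_op e f k)" for k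
      using poisson_op_exp_short_time[OF Suc.prems t e, of k] unfolding D_def
      by (simp add: algebra_simps flip: exp_add)
  qed
  also have "\<dots> = exp D * poisson_op (real n * e) (\<lambda>k. exp (t * poisson_op e f k)) 0"
    by (rule poisson_op_cmult)
  also have "\<dots> \<le> exp D * (exp (real n * D) * exp (t * poisson_op (real n * e) (poisson_op e f) 0))"
    unfolding D_def by (intro mult_left_mono Suc.IH lip1_poisson_op Bseq_poisson_op Suc.prems) simp
  also have "poisson_op (real n * e) (poisson_op e f) 0 = poisson_op (real (Suc n) * e) f 0"
    using poisson_op_semigroup[OF n0 _ Suc.prems(2), of e 0] e by (simp add: algebra_simps)
  finally show ?case unfolding D_def by (simp add: algebra_simps flip: exp_add)
qed

text \<open>Exponential bound for a single Poisson law: letting the step size tend to 0 removes the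
  second-order error, P_L (exp (t f)) 0 \<le> exp (t P_L f 0 + L psi t).\<close>
lemma poisson_laplace_bound:
  assumes lip: "lip1 f" and bf: "Bseq f" and t: "0 \<le> t" and L: "0 \<le> L"
  shows "poisson_op L (\<lambda>k. exp (t * f k)) 0 \<le> exp (t * poisson_op L f 0 + L * psi t)"
proof (cases "L = 0")
  case True
  then show ?thesis by simp
next
  case False
  with L have L0: "0 < L" by simp
  define X where "X = poisson_op L (\<lambda>k. exp (t * f k)) 0"
  define b where "b = t * poisson_op L f 0 + L * psi t"
  have approx: "X \<le> exp (b + short_time_const t * L\<^sup>2 / real n)" if n: "n \<ge> nat \<lceil>L\<rceil> + 1" for n
  proof -
    have npos: "real n > 0" and Ln: "L \<le> real n" using n by linarith+
    define e where "e = L / real n"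
    have e: "0 < e" "e \<le> 1" using L0 npos Ln by (auto simp: e_def)
    have ne: "real n * e = L" using npos by (simp add: e_def)
    have "X \<le> exp (real n * (e * psi t + short_time_const t * e\<^sup>2)) * exp (t * poisson_op L f 0)"
      using poisson_op_exp_iterated[OF t e lip bf, of n] unfolding ne X_def .
    also have "real n * (e * psi t + short_time_const t * e\<^sup>2) = L * psi t + short_time_const t * L\<^sup>2 / real n"
      using npos by (simp add: e_def power2_eq_square field_simps)
    finally show ?thesis by (simp add: b_def algebra_simps flip: exp_add)
  qed
  have "(\<lambda>n. exp (b + short_time_const t * L\<^sup>2 / real n)) \<longlonglongrightarrow> exp (b + 0)"
    by (intro tendsto_intros lim_const_over_n)
  then have "X \<le> exp (b + 0)"
    by (rule LIMSEQ_le_const) (use approx in auto)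
  then show ?thesis by (simp add: X_def b_def)
qed

section \<open>Poisson mixtures\<close>

definition mixing_law :: "real \<Rightarrow> real measure \<Rightarrow> bool" where
  "mixing_law a \<sigma> \<longleftrightarrow> prob_space \<sigma> \<and> sets \<sigma> = sets borel \<and> emeasure \<sigma> {0..a} = 1"

lemma mixing_law_prob_space: "mixing_law a \<sigma> \<Longrightarrow> prob_space \<sigma>"
  by (simp add: mixing_law_def)

lemma mixing_law_measurable:
  "mixing_law a \<sigma> \<Longrightarrow> f \<in> borel_measurable borel \<Longrightarrow> f \<in> borel_measurable \<sigma>"
  unfolding mixing_law_def using measurable_cong_sets by blast

lemma mixing_law_AE_interval:
  assumes "mixing_law a \<sigma>" shows "AE l in \<sigma>. l \<in> {0..a}"
proof -
  interpret prob_space \<sigma> using assms by (rule mixing_law_prob_space)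
  have ev: "{0..a} \<in> sets \<sigma>" using assms by (simp add: mixing_law_def)
  have "prob {0..a} = 1" using assms emeasure_eq_measure[of "{0..a}"] by (simp add: mixing_law_def)
  then show ?thesis using AE_in_set_eq_1[OF ev] by simp
qed

lemma poisson_op_integrable_mixing:
  assumes "mixing_law a \<sigma>" and bg: "Bseq g"
  shows "integrable \<sigma> (\<lambda>l. poisson_op l g k)"
proof -
  interpret prob_space \<sigma> using assms(1) by (rule mixing_law_prob_space)
  obtain B where B: "\<And>k. \<bar>g k\<bar> \<le> B" using bg by (metis Bseq_realE)
  show ?thesis
    by (rule integrable_const_bound[where B = B])
       (use poisson_op_bound B mixing_law_measurable[OF assms(1) poisson_op_param_measurable[OF bg]] in auto)
qed

text \<open>Expectations under the mixture mu are sigma-averages of Poisson expectations; first for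
  nonnegative functions, by exchanging the series over k with the sigma-integral.\<close>
lemma mixture_expectation_nonneg:
  assumes \<sigma>: "mixing_law a \<sigma>" and mu: "\<And>k. pmf \<mu> k = (\<integral>l. poisson_weight l k \<partial>\<sigma>)"
    and bg: "Bseq g" and g0: "\<And>k. 0 \<le> g k"
  shows "measure_pmf.expectation \<mu> g = (\<integral>l. poisson_op l g 0 \<partial>\<sigma>)"
proof -
  interpret prob_space \<sigma> using \<sigma> by (rule mixing_law_prob_space)
  have AE0: "AE l in \<sigma>. l \<in> {0..a}" by (rule mixing_law_AE_interval[OF \<sigma>])
  have weight_meas: "(\<lambda>l. poisson_weight l k) \<in> borel_measurable \<sigma>" for k
    unfolding poisson_weight_def by (intro mixing_law_measurable[OF \<sigma>] borel_measurable_continuous_onI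
        continuous_intros) simp
  have weight_int: "integrable \<sigma> (\<lambda>l. poisson_weight l k * g k)" for k
  proof (intro integrable_mult_left integrable_const_bound[where B = 1])
    show "AE l in \<sigma>. norm (poisson_weight l k) \<le> 1"
      using AE0 by eventually_elim (auto simp: pmf_poisson_law[symmetric] poisson_weight_nonneg pmf_le_1)
  qed (rule weight_meas)
  have series: "ennreal (poisson_op l g 0) = (\<Sum>k. ennreal (poisson_weight l k * g k))" if "0 \<le> l" for l
  proof -
    have "ennreal (poisson_op l g 0) = (\<integral>\<^sup>+ k. ennreal (g k) \<partial>measure_pmf (poisson_law l))"
      unfolding poisson_op_def by (simp, rule nn_integral_eq_integral[symmetric])
        (auto intro: Bseq_integrable_pmf bg g0)
    also have "\<dots> = (\<Sum>k. ennreal (poisson_weight l k * g k))"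
      by (simp add: nn_integral_measure_pmf nn_integral_count_space_nat ennreal_mult g0
          pmf_poisson_law that poisson_weight_nonneg)
    finally show ?thesis .
  qed
  have "ennreal (measure_pmf.expectation \<mu> g) = (\<integral>\<^sup>+ k. ennreal (g k) \<partial>measure_pmf \<mu>)"
    by (rule nn_integral_eq_integral[symmetric]) (auto intro: Bseq_integrable_pmf bg g0)
  also have "\<dots> = (\<Sum>k. ennreal (pmf \<mu> k * g k))"
    by (simp add: nn_integral_measure_pmf nn_integral_count_space_nat ennreal_mult g0)
  also have "\<dots> = (\<Sum>k. \<integral>\<^sup>+ l. ennreal (poisson_weight l k * g k) \<partial>\<sigma>)"
  proof (rule suminf_cong)
    fix k
    have "ennreal (pmf \<mu> k * g k) = ennreal (\<integral>l. poisson_weight l k * g k \<partial>\<sigma>)" by (simp add: mu)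
    also have "\<dots> = (\<integral>\<^sup>+ l. ennreal (poisson_weight l k * g k) \<partial>\<sigma>)"
      by (rule nn_integral_eq_integral[symmetric, OF weight_int])
         (use AE0 in \<open>eventually_elim, auto intro!: mult_nonneg_nonneg poisson_weight_nonneg g0\<close>)
    finally show "ennreal (pmf \<mu> k * g k) = (\<integral>\<^sup>+ l. ennreal (poisson_weight l k * g k) \<partial>\<sigma>)" .
  qed
  also have "\<dots> = (\<integral>\<^sup>+ l. (\<Sum>k. ennreal (poisson_weight l k * g k)) \<partial>\<sigma>)"
    by (rule nn_integral_suminf[symmetric]) (use weight_meas in measurable)
  also have "\<dots> = (\<integral>\<^sup>+ l. ennreal (poisson_op l g 0) \<partial>\<sigma>)"
    by (rule nn_integral_cong_AE) (use AE0 in \<open>eventually_elim, simp add: series\<close>)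
  also have "\<dots> = ennreal (\<integral>l. poisson_op l g 0 \<partial>\<sigma>)"
    by (rule nn_integral_eq_integral)
       (use poisson_op_integrable_mixing[OF \<sigma> bg, of 0] in \<open>auto simp: poisson_op_def g0\<close>)
  finally show ?thesis by (simp add: g0 poisson_op_def)
qed

lemma mixture_expectation:
  assumes \<sigma>: "mixing_law a \<sigma>" and mu: "\<And>k. pmf \<mu> k = (\<integral>l. poisson_weight l k \<partial>\<sigma>)"
    and bg: "Bseq g"
  shows "measure_pmf.expectation \<mu> g = (\<integral>l. poisson_op l g 0 \<partial>\<sigma>)"
proof -
  interpret prob_space \<sigma> using \<sigma> by (rule mixing_law_prob_space)
  obtain B where B: "\<And>k. \<bar>g k\<bar> \<le> B" using bg by (metis Bseq_realE)
  have shifted: "Bseq (\<lambda>k. g k + B)" by (intro Bseq_add_fun bg Bfun_const)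
  have "measure_pmf.expectation \<mu> (\<lambda>k. g k + B) = (\<integral>l. poisson_op l (\<lambda>k. g k + B) 0 \<partial>\<sigma>)"
    by (rule mixture_expectation_nonneg[OF \<sigma> mu shifted]) (use B in \<open>smt (verit)\<close>)
  also have "\<dots> = (\<integral>l. poisson_op l g 0 + B \<partial>\<sigma>)" by (simp add: poisson_op_add bg)
  also have "\<dots> = (\<integral>l. poisson_op l g 0 \<partial>\<sigma>) + B"
    by (subst Bochner_Integration.integral_add)
       (auto intro!: poisson_op_integrable_mixing[OF \<sigma> bg] simp: prob_space)
  finally show ?thesis
    by (subst (asm) Bochner_Integration.integral_add) (auto intro!: Bseq_integrable_pmf bg)
qed

text \<open>Hoeffding's lemma in the mixing variable: l \<mapsto> P_l f 0 is 1-Lipschitz, so it ranges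
  over an interval of length a on the support of sigma.\<close>
lemma hoeffding_mixing:
  assumes a: "a > 0" and \<sigma>: "mixing_law a \<sigma>" and lip: "lip1 f" and bf: "Bseq f" and t: "0 < t"
  shows "(\<integral>l. exp (t * poisson_op l f 0) \<partial>\<sigma>) \<le> exp (t * (\<integral>l. poisson_op l f 0 \<partial>\<sigma>) + t\<^sup>2 * a\<^sup>2 / 8)"
proof -
  interpret prob_space \<sigma> using \<sigma> by (rule mixing_law_prob_space)
  define F where "F l = poisson_op l f 0" for l
  have lip_nat: "lipschitz_nat 1 f" by (rule lipschitz_nat_lip1[OF lip])
  have Fm: "F \<in> borel_measurable \<sigma>"
    unfolding F_def by (rule mixing_law_measurable[OF \<sigma> poisson_op_param_measurable[OF bf]])
  obtain B where B: "\<And>k. \<bar>f k\<bar> \<le> B" using bf by (metis Bseq_realE)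
  have FB: "\<bar>F l\<bar> \<le> B" for l unfolding F_def by (rule poisson_op_bound[OF B])
  have cont: "continuous_on {0..a} F" unfolding F_def by (rule poisson_op_param_continuous[OF lip_nat bf])
  obtain x0 where x0: "x0 \<in> {0..a}" "\<And>y. y \<in> {0..a} \<Longrightarrow> F x0 \<le> F y"
    using continuous_attains_inf[OF compact_Icc _ cont] a by auto
  have range: "F l \<in> {F x0..F x0 + a}" if "l \<in> {0..a}" for l
  proof -
    have "\<bar>F l - F x0\<bar> \<le> 1 * \<bar>l - x0\<bar>" unfolding F_def by (rule poisson_op_param_lipschitz[OF lip_nat bf])
    also have "\<dots> \<le> a" using that x0(1) by auto
    finally show ?thesis using x0(2)[OF that] by auto
  qed
  interpret interval_bounded_random_variable \<sigma> F "F x0" "F x0 + a"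
  proof
    show "random_variable borel F" using Fm by simp
    show "AE x in \<sigma>. F x \<in> {F x0..F x0 + a}" using mixing_law_AE_interval[OF \<sigma>] by eventually_elim (rule range)
  qed
  have int: "integrable \<sigma> (\<lambda>x. exp (t * (F x - expectation F)))"
  proof (rule integrable_const_bound[where B = "exp (t * (B - expectation F))"])
    show "AE x in \<sigma>. norm (exp (t * (F x - expectation F))) \<le> exp (t * (B - expectation F))"
      using FB t by (intro AE_I2) (simp add: abs_le_iff)
  qed (use Fm in measurable)
  have "ennreal (\<integral>x. exp (t * (F x - expectation F)) \<partial>\<sigma>) = (\<integral>\<^sup>+ x. exp (t * (F x - expectation F)) \<partial>\<sigma>)"
    by (rule nn_integral_eq_integral[symmetric, OF int]) auto
  also have "\<dots> \<le> ennreal (exp (t\<^sup>2 * (F x0 + a - F x0)\<^sup>2 / 8))"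
    by (rule Hoeffdings_lemma_nn_integral[OF t])
  finally have centred: "(\<integral>x. exp (t * (F x - expectation F)) \<partial>\<sigma>) \<le> exp (t\<^sup>2 * a\<^sup>2 / 8)"
    by (subst (asm) ennreal_le_iff) auto
  have "(\<integral>l. exp (t * F l) \<partial>\<sigma>) = (\<integral>x. exp (t * expectation F) * exp (t * (F x - expectation F)) \<partial>\<sigma>)"
    by (intro Bochner_Integration.integral_cong) (auto simp: algebra_simps simp flip: exp_add)
  also have "\<dots> \<le> exp (t * expectation F) * exp (t\<^sup>2 * a\<^sup>2 / 8)" using centred by simp
  finally show ?thesis by (simp add: F_def[abs_def] exp_add)
qed

lemma mixture_laplace_bound:
  assumes a: "a > 0" and \<sigma>: "mixing_law a \<sigma>" and mu: "\<And>k. pmf \<mu> k = (\<integral>l. poisson_weight l k \<partial>\<sigma>)"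
    and lip: "lip1 f" and bf: "Bseq f" and t: "0 \<le> t"
  shows "measure_pmf.expectation \<mu> (\<lambda>k. exp (t * f k))
    \<le> exp (t * measure_pmf.expectation \<mu> f + (a + a\<^sup>2 / 4) * psi t)"
proof -
  interpret prob_space \<sigma> using \<sigma> by (rule mixing_law_prob_space)
  define F where "F l = poisson_op l f 0" for l
  have bexp: "Bseq (\<lambda>k. exp (t * f k))" by (intro Bseq_exp Bseq_cmult bf)
  obtain B where B: "\<And>k. \<bar>f k\<bar> \<le> B" using bf by (metis Bseq_realE)
  have int: "integrable \<sigma> (\<lambda>l. exp (t * F l))"
  proof (rule integrable_const_bound[where B = "exp (t * B)"])
    show "AE x in \<sigma>. norm (exp (t * F x)) \<le> exp (t * B)"
      using poisson_op_bound[OF B] t unfolding F_def by (intro AE_I2) (simp add: abs_le_iff mult_left_mono)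
  qed (unfold F_def, rule mixing_law_measurable[OF \<sigma>], measurable, rule poisson_op_param_measurable[OF bf])
  have hoeffding: "(\<integral>l. exp (t * F l) \<partial>\<sigma>) \<le> exp (t * (\<integral>l. F l \<partial>\<sigma>) + (a\<^sup>2 / 4) * psi t)"
  proof (cases "t = 0")
    case False
    then have "(\<integral>l. exp (t * F l) \<partial>\<sigma>) \<le> exp (t * (\<integral>l. F l \<partial>\<sigma>) + t\<^sup>2 * a\<^sup>2 / 8)"
      unfolding F_def using t by (intro hoeffding_mixing[OF a \<sigma> lip bf]) simp
    also have "t\<^sup>2 * a\<^sup>2 / 8 \<le> (a\<^sup>2 / 4) * psi t"
      using mult_left_mono[OF psi_quadratic_lower[OF t], of "a\<^sup>2 / 4"] by simp
    finally show ?thesis by simp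
  qed (simp add: prob_space psi_def)
  have "measure_pmf.expectation \<mu> (\<lambda>k. exp (t * f k)) = (\<integral>l. poisson_op l (\<lambda>k. exp (t * f k)) 0 \<partial>\<sigma>)"
    by (rule mixture_expectation[OF \<sigma> mu bexp])
  also have "\<dots> \<le> (\<integral>l. exp (a * psi t) * exp (t * F l) \<partial>\<sigma>)"
  proof (rule integral_mono_AE)
    show "integrable \<sigma> (\<lambda>l. poisson_op l (\<lambda>k. exp (t * f k)) 0)"
      by (rule poisson_op_integrable_mixing[OF \<sigma> bexp])
    show "integrable \<sigma> (\<lambda>l. exp (a * psi t) * exp (t * F l))" using int by simp
    show "AE l in \<sigma>. poisson_op l (\<lambda>k. exp (t * f k)) 0 \<le> exp (a * psi t) * exp (t * F l)"
      using mixing_law_AE_interval[OF \<sigma>]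
    proof eventually_elim
      case (elim l)
      have "poisson_op l (\<lambda>k. exp (t * f k)) 0 \<le> exp (t * F l + l * psi t)"
        unfolding F_def by (rule poisson_laplace_bound[OF lip bf t]) (use elim in simp)
      also have "\<dots> \<le> exp (t * F l + a * psi t)"
        using elim psi_nonneg[of t] by (auto intro!: mult_right_mono)
      finally show ?case by (simp add: exp_add mult_ac)
    qed
  qed
  also have "\<dots> = exp (a * psi t) * (\<integral>l. exp (t * F l) \<partial>\<sigma>)" by simp
  also have "\<dots> \<le> exp (a * psi t) * exp (t * (\<integral>l. F l \<partial>\<sigma>) + (a\<^sup>2 / 4) * psi t)"
    by (intro mult_left_mono hoeffding) simp
  also have "(\<integral>l. F l \<partial>\<sigma>) = measure_pmf.expectation \<mu> f"
    unfolding F_def by (rule mixture_expectation[OF \<sigma> mu bf, symmetric])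
  finally show ?thesis by (simp add: algebra_simps flip: exp_add)
qed

section \<open>The Gibbs variational inequality\<close>

text \<open>ennreal truncates at 0, so a nonnegative weight times ennreal x only sees the
  positive part of x; used for both parts of the log-likelihood ratio.\<close>
lemma ennreal_mult_max0: "0 \<le> p \<Longrightarrow> ennreal p * ennreal x = ennreal (p * max x 0)"
  by (cases "0 \<le> x") (auto simp: ennreal_mult' ennreal_neg max_def)

text \<open>The negative part of the relative entropy integrand has integral at most 1,
  since nu_k ln (mu_k / nu_k) \<le> mu_k - nu_k \<le> mu_k.\<close>
lemma rel_entropy_negative_part_le_one:
  fixes \<nu> \<mu> :: "nat pmf"
  assumes ac: "\<forall>k. pmf \<mu> k = 0 \<longrightarrow> pmf \<nu> k = 0"
  shows "(\<integral>\<^sup>+ k. ennreal (- ln (pmf \<nu> k / pmf \<mu> k)) \<partial>measure_pmf \<nu>) \<le> 1"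
proof -
  let ?c = "count_space (UNIV :: nat set)"
  have "(\<integral>\<^sup>+ k. ennreal (- ln (pmf \<nu> k / pmf \<mu> k)) \<partial>measure_pmf \<nu>)
      = (\<integral>\<^sup>+ k. ennreal (pmf \<nu> k * max (- ln (pmf \<nu> k / pmf \<mu> k)) 0) \<partial>?c)"
    by (simp add: nn_integral_measure_pmf ennreal_mult_max0)
  also have "\<dots> \<le> (\<integral>\<^sup>+ k. ennreal (pmf \<mu> k) \<partial>?c)"
  proof (intro nn_integral_mono ennreal_leI)
    fix k
    show "pmf \<nu> k * max (- ln (pmf \<nu> k / pmf \<mu> k)) 0 \<le> pmf \<mu> k"
    proof (cases "pmf \<nu> k = 0")
      case False
      then have nu: "pmf \<nu> k > 0" using pmf_nonneg[of \<nu> k] by linarith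
      with ac have mu: "pmf \<mu> k > 0" using pmf_nonneg[of \<mu> k] by (metis less_eq_real_def)
      have "- ln (pmf \<nu> k / pmf \<mu> k) = ln (pmf \<mu> k / pmf \<nu> k)" using nu mu by (simp add: ln_div)
      also have "\<dots> \<le> pmf \<mu> k / pmf \<nu> k - 1" using nu mu by (intro ln_le_minus_one) simp
      finally show ?thesis using nu mu by (auto simp: field_simps max_def)
    qed simp
  qed
  also have "\<dots> = 1"
    using nn_integral_measure_pmf[of \<mu> "\<lambda>_. 1"] by (simp add: measure_pmf.emeasure_space_1)
  finally show ?thesis .
qed

text \<open>Pointwise form of the Gibbs inequality, from ln x \<le> x - 1 applied to
  x = mu_k e^(G_k) / nu_k; the log-likelihood ratio is split into its positive and
  negative parts and all terms are made nonnegative by adding C \<ge> -G.\<close>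
lemma gibbs_pointwise:
  fixes \<nu> \<mu> :: "nat pmf"
  assumes ac: "pmf \<mu> k = 0 \<longrightarrow> pmf \<nu> k = 0" and G: "- C \<le> G" "0 \<le> C"
  defines "f \<equiv> ln (pmf \<nu> k / pmf \<mu> k)"
  shows "ennreal (pmf \<nu> k * (G + C + 1)) + ennreal (pmf \<nu> k) * ennreal (- f)
    \<le> ennreal (pmf \<nu> k) * ennreal f + ennreal (pmf \<mu> k * exp G) + ennreal (pmf \<nu> k * C)"
proof -
  have real: "pmf \<nu> k * (G + C + 1) + pmf \<nu> k * max (- f) 0
      \<le> pmf \<nu> k * max f 0 + pmf \<mu> k * exp G + pmf \<nu> k * C"
  proof (cases "pmf \<nu> k = 0")
    case False
    then have nu: "pmf \<nu> k > 0" using pmf_nonneg[of \<nu> k] by linarith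
    with ac have mu: "pmf \<mu> k > 0" using pmf_nonneg[of \<mu> k] by (metis less_eq_real_def)
    have "G - f = ln (pmf \<mu> k * exp G / pmf \<nu> k)"
      using nu mu by (simp add: f_def ln_div ln_mult)
    also have "\<dots> \<le> pmf \<mu> k * exp G / pmf \<nu> k - 1"
      using nu mu by (intro ln_le_minus_one) simp
    finally have "pmf \<nu> k * (G - f + 1) \<le> pmf \<mu> k * exp G"
      using nu by (simp add: field_simps)
    moreover have "max f 0 - max (- f) 0 = f" by auto
    ultimately show ?thesis by (simp add: algebra_simps)
  qed simp
  have "ennreal (pmf \<nu> k * (G + C + 1)) + ennreal (pmf \<nu> k) * ennreal (- f)
      = ennreal (pmf \<nu> k * (G + C + 1) + pmf \<nu> k * max (- f) 0)"
    using G by (simp add: ennreal_mult_max0 ennreal_plus)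
  also have "\<dots> \<le> ennreal (pmf \<nu> k * max f 0 + pmf \<mu> k * exp G + pmf \<nu> k * C)"
    using real by (rule ennreal_leI)
  also have "\<dots> = ennreal (pmf \<nu> k) * ennreal f + ennreal (pmf \<mu> k * exp G) + ennreal (pmf \<nu> k * C)"
    using G by (simp add: ennreal_mult_max0 ennreal_plus)
  finally show ?thesis .
qed

lemma gibbs_variational:
  fixes \<nu> \<mu> :: "nat pmf" and G :: "nat \<Rightarrow> real"
  assumes GC: "\<And>k. \<bar>G k\<bar> \<le> C" and Z: "measure_pmf.expectation \<mu> (\<lambda>k. exp (G k)) \<le> 1"
  shows "ereal (measure_pmf.expectation \<nu> G) \<le> rel_entropy \<nu> \<mu>"
proof (cases "\<forall>k. pmf \<mu> k = 0 \<longrightarrow> pmf \<nu> k = 0")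
  case False
  then have "rel_entropy \<nu> \<mu> = \<infinity>" unfolding rel_entropy_def by argo
  then show ?thesis by simp
next
  case ac: True
  let ?c = "count_space (UNIV :: nat set)"
  define f where "f k = ln (pmf \<nu> k / pmf \<mu> k)" for k
  define P where "P = (\<integral>\<^sup>+ k. ennreal (f k) \<partial>measure_pmf \<nu>)"
  define N where "N = (\<integral>\<^sup>+ k. ennreal (- f k) \<partial>measure_pmf \<nu>)"
  have rel: "rel_entropy \<nu> \<mu> = enn2ereal P - enn2ereal N"
    using ac by (simp add: rel_entropy_def P_def N_def f_def Let_def)
  have C: "0 \<le> C" "\<And>k. - C \<le> G k" using GC[of 0] GC by (force, metis abs_le_D2 minus_le_iff)
  have intG: "integrable (measure_pmf p) G" for p
    by (rule measure_pmf.integrable_const_bound[where B = C]) (use GC in auto)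
  have "N \<le> 1" unfolding N_def f_def by (rule rel_entropy_negative_part_le_one[OF ac])
  then obtain n where n: "N = ennreal n" "0 \<le> n"
    by (metis ennreal_cases ennreal_one_neq_top neq_top_trans)
  have mean: "(\<integral>\<^sup>+ k. ennreal (pmf \<nu> k * (G k + C + 1)) \<partial>?c)
      = ennreal (measure_pmf.expectation \<nu> G + C + 1)"
  proof -
    have "(\<integral>\<^sup>+ k. ennreal (pmf \<nu> k * (G k + C + 1)) \<partial>?c) = (\<integral>\<^sup>+ k. ennreal (G k + C + 1) \<partial>measure_pmf \<nu>)"
      using C by (simp add: nn_integral_measure_pmf ennreal_mult')
    also have "\<dots> = ennreal (measure_pmf.expectation \<nu> (\<lambda>k. G k + C + 1))"
      by (rule nn_integral_eq_integral) (use intG C(2) in \<open>auto intro!: AE_I2 simp: add.assoc\<close>, smt (verit))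
    finally show ?thesis using intG by (simp add: Bochner_Integration.integral_add)
  qed
  obtain z where z: "(\<integral>\<^sup>+ k. ennreal (pmf \<mu> k * exp (G k)) \<partial>?c) = ennreal z" "0 \<le> z" "z \<le> 1"
  proof -
    have "(\<integral>\<^sup>+ k. ennreal (pmf \<mu> k * exp (G k)) \<partial>?c) = (\<integral>\<^sup>+ k. ennreal (exp (G k)) \<partial>measure_pmf \<mu>)"
      by (simp add: nn_integral_measure_pmf ennreal_mult')
    also have "\<dots> = ennreal (measure_pmf.expectation \<mu> (\<lambda>k. exp (G k)))"
      by (rule nn_integral_eq_integral)
         (use GC in \<open>auto intro!: measure_pmf.integrable_const_bound[where B = "exp C"] simp: abs_le_iff\<close>)
    finally show ?thesis using Z that by auto
  qed
  have const: "(\<integral>\<^sup>+ k. ennreal (pmf \<nu> k * C) \<partial>?c) = ennreal C"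
    using C nn_integral_measure_pmf[of \<nu> "\<lambda>_. ennreal C"]
    by (simp add: ennreal_mult' measure_pmf.emeasure_space_1 mult.commute)
  have integrated: "ennreal (measure_pmf.expectation \<nu> G + C + 1) + N \<le> P + ennreal z + ennreal C"
  proof -
    have "(\<integral>\<^sup>+ k. ennreal (pmf \<nu> k * (G k + C + 1)) + ennreal (pmf \<nu> k) * ennreal (- f k) \<partial>?c)
        \<le> (\<integral>\<^sup>+ k. ennreal (pmf \<nu> k) * ennreal (f k) + ennreal (pmf \<mu> k * exp (G k))
            + ennreal (pmf \<nu> k * C) \<partial>?c)"
      unfolding f_def by (intro nn_integral_mono gibbs_pointwise C) (use ac in auto)
    then show ?thesis
      by (simp add: nn_integral_add mean z const P_def N_def nn_integral_measure_pmf)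
  qed
  show ?thesis
  proof (cases P rule: ennreal_cases)
    case (real p)
    have "- C \<le> measure_pmf.expectation \<nu> G"
      using integral_mono[OF _ intG C(2), of \<nu>] by simp
    then have "ennreal (measure_pmf.expectation \<nu> G + C + 1 + n) \<le> ennreal (p + z + C)"
      using integrated real n z C by (simp add: ennreal_plus[symmetric] del: ennreal_plus)
    then have "measure_pmf.expectation \<nu> G + C + 1 + n \<le> p + z + C"
      using real z C by (subst (asm) ennreal_le_iff) auto
    then show ?thesis using real n z(3) by (simp add: rel)
  qed (simp add: rel n)
qed

section \<open>The quantile coupling\<close>

definition cdf_nat :: "nat pmf \<Rightarrow> nat \<Rightarrow> real" where
  "cdf_nat p k = measure_pmf.prob p {..k}"

definition cdf_nat_left :: "nat pmf \<Rightarrow> nat \<Rightarrow> real" where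
  "cdf_nat_left p i = (if i = 0 then 0 else cdf_nat p (i - 1))"

definition quantile :: "nat pmf \<Rightarrow> real \<Rightarrow> nat" where
  "quantile p u = (LEAST i. u < cdf_nat p i)"

lemma cdf_nat_mono: "i \<le> j \<Longrightarrow> cdf_nat p i \<le> cdf_nat p j"
  unfolding cdf_nat_def by (intro measure_pmf.finite_measure_mono) auto

lemma cdf_nat_nonneg: "0 \<le> cdf_nat p i"
  by (simp add: cdf_nat_def)

lemma cdf_nat_le_1: "cdf_nat p i \<le> 1"
  by (simp add: cdf_nat_def)

lemma cdf_nat_left_nonneg: "0 \<le> cdf_nat_left p i"
  by (simp add: cdf_nat_left_def cdf_nat_nonneg)

lemma cdf_nat_left_le_cdf_nat: "cdf_nat_left p i \<le> cdf_nat p i"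
  by (cases i) (auto simp: cdf_nat_left_def cdf_nat_nonneg cdf_nat_mono)

lemma cdf_nat_minus_left: "cdf_nat p i - cdf_nat_left p i = pmf p i"
proof (cases i)
  case 0
  then show ?thesis by (simp add: cdf_nat_left_def cdf_nat_def measure_pmf_single)
next
  case (Suc j)
  have "measure_pmf.prob p ({..j} \<union> {Suc j}) = measure_pmf.prob p {..j} + measure_pmf.prob p {Suc j}"
    by (rule measure_pmf.finite_measure_Union) auto
  moreover have "{..Suc j} = {..j} \<union> {Suc j}" by auto
  ultimately have "cdf_nat p (Suc j) = cdf_nat p j + pmf p (Suc j)"
    unfolding cdf_nat_def by (simp add: measure_pmf_single)
  then show ?thesis using Suc by (simp add: cdf_nat_left_def)
qed

lemma cdf_nat_limit: "cdf_nat p \<longlonglongrightarrow> 1"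
proof -
  have "(\<lambda>i. measure_pmf.prob p {..i}) \<longlonglongrightarrow> measure_pmf.prob p (\<Union>i. {..i})"
    by (rule measure_pmf.finite_Lim_measure_incseq) (auto simp: incseq_def)
  moreover have "(\<Union>i. {..i::nat}) = UNIV" by auto
  ultimately show ?thesis by (simp add: cdf_nat_def[abs_def])
qed

lemma quantile_le_iff: assumes "u < 1" shows "quantile p u \<le> k \<longleftrightarrow> u < cdf_nat p k"
proof
  have "\<exists>i. u < cdf_nat p i"
    using order_tendstoD(1)[OF cdf_nat_limit assms] by (metis eventually_sequentially order_refl)
  then have "u < cdf_nat p (quantile p u)" unfolding quantile_def by (rule LeastI_ex)
  moreover assume "quantile p u \<le> k"
  ultimately show "u < cdf_nat p k" using cdf_nat_mono by (metis order_less_le_trans)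
next
  assume "u < cdf_nat p k"
  then show "quantile p u \<le> k" unfolding quantile_def by (rule Least_le)
qed

lemma quantile_eq_iff:
  assumes "0 \<le> u" "u < 1" shows "quantile p u = i \<longleftrightarrow> cdf_nat_left p i \<le> u \<and> u < cdf_nat p i"
proof (cases i)
  case 0
  then show ?thesis using quantile_le_iff[OF assms(2), of p 0] assms(1) by (auto simp: cdf_nat_left_def)
next
  case (Suc j)
  have "quantile p u = i \<longleftrightarrow> quantile p u \<le> i \<and> \<not> quantile p u \<le> j" using Suc by auto
  also have "\<dots> \<longleftrightarrow> u < cdf_nat p i \<and> \<not> u < cdf_nat p j" using quantile_le_iff[OF assms(2)] by simp
  finally show ?thesis using Suc by (auto simp: cdf_nat_left_def)
qed

lemma quantile_bounds:
  "0 \<le> u \<Longrightarrow> u < 1 \<Longrightarrow> cdf_nat_left p (quantile p u) \<le> u \<and> u < cdf_nat p (quantile p u)"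
  using quantile_eq_iff[of u p "quantile p u"] by simp

abbreviation uniform01 :: "real measure" where
  "uniform01 \<equiv> restrict_space lborel {0..<1}"

lemma unit_interval_sets: "{0..<1::real} \<inter> space lborel \<in> sets lborel"
  by simp

lemma space_uniform01: "space uniform01 = {0..<1}"
  by (simp add: space_restrict_space)

lemma prob_space_uniform01: "prob_space uniform01"
  by (rule prob_spaceI) (simp add: space_uniform01 emeasure_restrict_space)

lemma sets_uniform01_iff: "A \<in> sets uniform01 \<longleftrightarrow> A \<subseteq> {0..<1} \<and> A \<in> sets borel"
  using sets_restrict_space_iff[OF unit_interval_sets, of A] by simp

text \<open>Quantile transform: Q_p u = i exactly on the interval [F_p (i - 1), F_p i), of length
  p {i}; hence Q_p maps the uniform law to p.\<close>
lemma quantile_preimage: "{u \<in> {0..<1}. quantile p u = i} = {cdf_nat_left p i..<cdf_nat p i}"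
  using cdf_nat_left_nonneg[of p i] cdf_nat_le_1[of p i] by (auto simp: quantile_eq_iff quantile_bounds)

lemma measure_quantile_preimage: "measure uniform01 {u \<in> {0..<1}. quantile p u = i} = pmf p i"
  unfolding quantile_preimage
  using cdf_nat_left_nonneg[of p i] cdf_nat_le_1[of p i] cdf_nat_left_le_cdf_nat[of p i]
  by (subst measure_restrict_space[OF unit_interval_sets]) (auto simp: cdf_nat_minus_left)

definition quantile_pair :: "nat pmf \<Rightarrow> nat pmf \<Rightarrow> real \<Rightarrow> nat \<times> nat" where
  "quantile_pair \<nu> \<mu> u = (quantile \<nu> u, quantile \<mu> u)"

lemma quantile_pair_measurable: "quantile_pair \<nu> \<mu> \<in> measurable uniform01 (count_space UNIV)"
  unfolding measurable_count_space_eq2_countable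
proof safe
  fix i j
  have "quantile_pair \<nu> \<mu> -` {(i, j)} \<inter> space uniform01
      = {0..<1} \<inter> {cdf_nat_left \<nu> i..<cdf_nat \<nu> i} \<inter> {cdf_nat_left \<mu> j..<cdf_nat \<mu> j}"
    unfolding space_uniform01 quantile_pair_def by (auto simp: quantile_eq_iff quantile_bounds)
  then show "quantile_pair \<nu> \<mu> -` {(i, j)} \<inter> space uniform01 \<in> sets uniform01"
    unfolding sets_uniform01_iff by auto
qed auto

definition quantile_coupling :: "nat pmf \<Rightarrow> nat pmf \<Rightarrow> (nat \<times> nat) pmf" where
  "quantile_coupling \<nu> \<mu> = Abs_pmf (distr uniform01 (count_space UNIV) (quantile_pair \<nu> \<mu>))"

lemma measure_quantile_coupling:
  "measure_pmf (quantile_coupling \<nu> \<mu>) = distr uniform01 (count_space UNIV) (quantile_pair \<nu> \<mu>)"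
  (is "_ = ?M")
proof -
  interpret prob_space ?M
    by (rule prob_space.prob_space_distr[OF prob_space_uniform01 quantile_pair_measurable])
  have sets: "sets ?M = UNIV" by simp
  have "AE x in ?M. measure ?M {x} \<noteq> 0"
    using AE_support_countable[OF sets] by (metis countableI_type AE_I2 UNIV_I)
  then show ?thesis unfolding quantile_coupling_def
    by (intro Abs_pmf_inverse) (auto simp: prob_space_axioms)
qed

lemma quantile_coupling_marginal:
  assumes "\<And>u. \<pi> (quantile_pair \<nu> \<mu> u) = quantile p u"
  shows "map_pmf \<pi> (quantile_coupling \<nu> \<mu>) = p"
proof (rule pmf_eqI)
  fix i
  have "pmf (map_pmf \<pi> (quantile_coupling \<nu> \<mu>)) i
      = measure uniform01 (quantile_pair \<nu> \<mu> -` (\<pi> -` {i}) \<inter> space uniform01)"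
    by (simp add: pmf_map measure_quantile_coupling measure_distr[OF quantile_pair_measurable])
  also have "quantile_pair \<nu> \<mu> -` (\<pi> -` {i}) \<inter> space uniform01 = {u \<in> {0..<1}. quantile p u = i}"
    by (simp add: space_uniform01 assms set_eq_iff conj_commute)
  finally show "pmf (map_pmf \<pi> (quantile_coupling \<nu> \<mu>)) i = pmf p i"
    by (simp only: measure_quantile_preimage)
qed

lemma quantile_coupling_in_couplings: "quantile_coupling \<nu> \<mu> \<in> couplings \<nu> \<mu>"
  unfolding couplings_def
  by (auto intro!: quantile_coupling_marginal simp: quantile_pair_def)

lemma nat_distance_as_series:
  "ennreal \<bar>real a - real b\<bar>
    = (\<Sum>k. ennreal \<bar>(if a \<le> k then 1 else 0) - (if b \<le> k then 1 else (0::real))\<bar>)"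
proof -
  have "(\<Sum>k. ennreal \<bar>(if a \<le> k then 1 else 0) - (if b \<le> k then 1 else (0::real))\<bar>)
      = (\<Sum>k\<in>{min a b..<max a b}. ennreal \<bar>(if a \<le> k then 1 else 0) - (if b \<le> k then 1 else (0::real))\<bar>)"
    by (rule suminf_finite) auto
  also have "\<dots> = (\<Sum>k\<in>{min a b..<max a b}. 1)"
    by (rule sum.cong) auto
  also have "\<dots> = ennreal \<bar>real a - real b\<bar>"
    by (simp add: of_nat_diff max_def min_def ennreal_of_nat_eq_real_of_nat)
  finally show ?thesis ..
qed

lemma quantile_coupling_cost:
  "(\<integral>\<^sup>+ xy. ennreal \<bar>real (fst xy) - real (snd xy)\<bar> \<partial>measure_pmf (quantile_coupling \<nu> \<mu>))
     = (\<Sum>k. ennreal \<bar>cdf_nat \<nu> k - cdf_nat \<mu> k\<bar>)"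
proof -
  define A where "A k = {min (cdf_nat \<nu> k) (cdf_nat \<mu> k)..<max (cdf_nat \<nu> k) (cdf_nat \<mu> k)}" for k
  have A01: "A k \<subseteq> {0..<1}" for k
    unfolding A_def using cdf_nat_nonneg[of \<nu> k] cdf_nat_nonneg[of \<mu> k] cdf_nat_le_1[of \<nu> k] cdf_nat_le_1[of \<mu> k] by auto
  have A_sets: "A k \<in> sets uniform01" for k using A01[of k] by (auto simp: sets_uniform01_iff A_def)
  have gap: "ennreal \<bar>(if u < a then 1 else 0) - (if u < b then 1 else (0::real))\<bar>
      = indicator {min a b..<max a b} u" for u a b :: real
    by (auto simp: indicator_def min_def max_def)
  have "(\<integral>\<^sup>+ xy. ennreal \<bar>real (fst xy) - real (snd xy)\<bar> \<partial>measure_pmf (quantile_coupling \<nu> \<mu>))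
      = (\<integral>\<^sup>+ u. ennreal \<bar>real (quantile \<nu> u) - real (quantile \<mu> u)\<bar> \<partial>uniform01)"
    unfolding measure_quantile_coupling
    by (subst nn_integral_distr[OF quantile_pair_measurable]) (auto simp: quantile_pair_def)
  also have "\<dots> = (\<integral>\<^sup>+ u. (\<Sum>k. indicator (A k) u) \<partial>uniform01)"
  proof (rule nn_integral_cong)
    fix u assume "u \<in> space uniform01"
    then have "u < 1" by (auto simp: space_uniform01)
    then show "ennreal \<bar>real (quantile \<nu> u) - real (quantile \<mu> u)\<bar> = (\<Sum>k. indicator (A k) u)"
      unfolding nat_distance_as_series A_def gap[symmetric] using quantile_le_iff by simp
  qed
  also have "\<dots> = (\<Sum>k. \<integral>\<^sup>+ u. indicator (A k) u \<partial>uniform01)"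
    by (rule nn_integral_suminf) (use A_sets in auto)
  also have "\<dots> = (\<Sum>k. ennreal \<bar>cdf_nat \<nu> k - cdf_nat \<mu> k\<bar>)"
  proof (rule suminf_cong)
    fix k
    have "(\<integral>\<^sup>+ u. indicator (A k) u \<partial>uniform01) = emeasure lborel (A k)"
      using A_sets A01 by (simp add: emeasure_restrict_space)
    also have "\<dots> = ennreal \<bar>cdf_nat \<nu> k - cdf_nat \<mu> k\<bar>" unfolding A_def by (simp add: max_def min_def)
    finally show "(\<integral>\<^sup>+ u. indicator (A k) u \<partial>uniform01) = ennreal \<bar>cdf_nat \<nu> k - cdf_nat \<mu> k\<bar>" .
  qed
  finally show ?thesis .
qed

lemma W1_le_cdf_distance: "W1 \<nu> \<mu> \<le> (\<Sum>k. ennreal \<bar>cdf_nat \<nu> k - cdf_nat \<mu> k\<bar>)"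
  unfolding W1_def quantile_coupling_cost[symmetric]
  by (rule INF_lower[OF quantile_coupling_in_couplings])

text \<open>The near-optimal dual test function: f_N k = sum over j < N, j < k of
  sgn (F_mu j - F_nu j).  Its mean under nu minus its mean under mu is the truncated
  L1 distance of the distribution functions.\<close>
definition cdf_sign :: "nat pmf \<Rightarrow> nat pmf \<Rightarrow> nat \<Rightarrow> real" where
  "cdf_sign \<nu> \<mu> j = sgn (cdf_nat \<mu> j - cdf_nat \<nu> j)"

definition cdf_test :: "nat pmf \<Rightarrow> nat pmf \<Rightarrow> nat \<Rightarrow> nat \<Rightarrow> real" where
  "cdf_test \<nu> \<mu> N k = (\<Sum>j<N. cdf_sign \<nu> \<mu> j * indicator {j<..} k)"

definition cdf_gap :: "nat pmf \<Rightarrow> nat pmf \<Rightarrow> nat \<Rightarrow> real" where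
  "cdf_gap \<nu> \<mu> N = (\<Sum>j<N. \<bar>cdf_nat \<nu> j - cdf_nat \<mu> j\<bar>)"

lemma cdf_sign_abs: "\<bar>cdf_sign \<nu> \<mu> j\<bar> \<le> 1"
  by (simp add: cdf_sign_def sgn_real_def)

lemma lip1_cdf_test: "lip1 (cdf_test \<nu> \<mu> N)"
  unfolding lip1_def
proof
  fix k
  have "cdf_test \<nu> \<mu> N (Suc k) - cdf_test \<nu> \<mu> N k
      = (\<Sum>j<N. cdf_sign \<nu> \<mu> j * (indicator {j<..} (Suc k) - indicator {j<..} k))"
    unfolding cdf_test_def sum_subtractf[symmetric] by (simp add: right_diff_distrib)
  also have "\<dots> = (\<Sum>j\<in>{..<N} \<inter> {k}. cdf_sign \<nu> \<mu> j)"
    by (rule sum.mono_neutral_cong_right) (auto simp: indicator_def)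
  finally show "\<bar>cdf_test \<nu> \<mu> N (Suc k) - cdf_test \<nu> \<mu> N k\<bar> \<le> 1"
    by (cases "k < N") (auto simp: cdf_sign_abs)
qed

lemma Bseq_cdf_test: "Bseq (cdf_test \<nu> \<mu> N)"
proof (rule BseqI')
  fix k
  have "\<bar>cdf_test \<nu> \<mu> N k\<bar> \<le> (\<Sum>j<N. \<bar>cdf_sign \<nu> \<mu> j * indicator {j<..} k\<bar>)"
    unfolding cdf_test_def by (rule sum_abs)
  also have "\<dots> \<le> (\<Sum>j<N. 1)"
    by (intro sum_mono) (auto simp: cdf_sign_abs abs_mult indicator_def)
  finally show "norm (cdf_test \<nu> \<mu> N k) \<le> real N" by simp
qed

lemma expectation_cdf_test:
  "measure_pmf.expectation p (cdf_test \<nu> \<mu> N) = (\<Sum>j<N. cdf_sign \<nu> \<mu> j * (1 - cdf_nat p j))"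
proof -
  have "measure_pmf.prob p {j<..} = 1 - cdf_nat p j" for j
    using measure_pmf.prob_compl[of "{..j}" p] by (simp add: cdf_nat_def Compl_eq_Diff_UNIV[symmetric])
  moreover have "integrable (measure_pmf p) (indicator {j<..} :: nat \<Rightarrow> real)" for j
    by (rule measure_pmf.integrable_const_bound[where B = 1]) auto
  ultimately show ?thesis
    unfolding cdf_test_def by (subst Bochner_Integration.integral_sum) auto
qed

lemma expectation_cdf_test_diff:
  "measure_pmf.expectation \<nu> (cdf_test \<nu> \<mu> N) - measure_pmf.expectation \<mu> (cdf_test \<nu> \<mu> N) = cdf_gap \<nu> \<mu> N"
proof -
  have "cdf_sign \<nu> \<mu> j * (1 - cdf_nat \<nu> j) - cdf_sign \<nu> \<mu> j * (1 - cdf_nat \<mu> j)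
      = \<bar>cdf_nat \<nu> j - cdf_nat \<mu> j\<bar>" for j
    unfolding cdf_sign_def by (auto simp: sgn_real_def algebra_simps)
  then show ?thesis
    unfolding expectation_cdf_test cdf_gap_def by (simp add: sum_subtractf[symmetric])
qed

text \<open>h_c is the Legendre transform of c psi, attained at t = ln (1 + W / c).\<close>
lemma h_c_legendre:
  assumes c: "c > 0" and W: "0 \<le> W"
  shows "ln (1 + W / c) * W - c * psi (ln (1 + W / c)) = h_c c W"
proof -
  define L where "L = ln (1 + W / c)"
  have "exp L = 1 + W / c" using c W by (simp add: L_def add_pos_nonneg)
  then have "L * W - c * psi L = (c + W) * L - W" using c by (simp add: psi_def algebra_simps)
  also have "h_c c W = (c + W) * L - W"
    unfolding h_c_def h_fun_def L_def using c by (simp add: field_simps)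
  finally show ?thesis unfolding L_def by simp
qed

lemma entropy_bound_from_laplace:
  fixes \<nu> \<mu> :: "nat pmf"
  assumes c: "c > 0"
    and laplace: "\<And>f t. lip1 f \<Longrightarrow> Bseq f \<Longrightarrow> 0 \<le> t \<Longrightarrow>
      measure_pmf.expectation \<mu> (\<lambda>k. exp (t * f k)) \<le> exp (t * measure_pmf.expectation \<mu> f + c * psi t)"
  shows "ereal (h_c c (cdf_gap \<nu> \<mu> N)) \<le> rel_entropy \<nu> \<mu>"
proof -
  define W where "W = cdf_gap \<nu> \<mu> N"
  have W: "0 \<le> W" by (simp add: W_def cdf_gap_def sum_nonneg)
  define t where "t = ln (1 + W / c)"
  have t: "0 \<le> t" using c W by (simp add: t_def)
  define f where "f = cdf_test \<nu> \<mu> N"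
  define m where "m = measure_pmf.expectation \<mu> f"
  define G where "G k = t * (f k - m) - c * psi t" for k
  obtain B where B: "\<And>k. \<bar>f k\<bar> \<le> B" unfolding f_def by (metis Bseq_cdf_test Bseq_realE)
  have G_bound: "\<bar>G k\<bar> \<le> t * (B + \<bar>m\<bar>) + c * psi t" for k
  proof -
    have "\<bar>f k - m\<bar> \<le> B + \<bar>m\<bar>" using B[of k] by linarith
    then have "\<bar>t * (f k - m)\<bar> \<le> t * (B + \<bar>m\<bar>)"
      unfolding abs_mult using t by (simp add: mult_left_mono)
    moreover have "0 \<le> c * psi t" using c psi_nonneg[of t] by simp
    ultimately show ?thesis unfolding G_def by (simp add: abs_le_iff)
  qed
  have "measure_pmf.expectation \<mu> (\<lambda>k. exp (G k))
      = exp (- t * m - c * psi t) * measure_pmf.expectation \<mu> (\<lambda>k. exp (t * f k))"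
  proof -
    have "(\<lambda>k. exp (G k)) = (\<lambda>k. exp (- t * m - c * psi t) * exp (t * f k))"
      unfolding G_def by (auto simp: algebra_simps simp flip: exp_add)
    then show ?thesis by simp
  qed
  also have "\<dots> \<le> exp (- t * m - c * psi t) * exp (t * m + c * psi t)"
    unfolding m_def f_def by (intro mult_left_mono laplace lip1_cdf_test Bseq_cdf_test t) simp
  also have "\<dots> = 1" by (simp flip: exp_add)
  finally have "ereal (measure_pmf.expectation \<nu> G) \<le> rel_entropy \<nu> \<mu>"
    by (rule gibbs_variational[OF G_bound])
  moreover have "measure_pmf.expectation \<nu> G = t * (measure_pmf.expectation \<nu> f - m) - c * psi t"
    unfolding G_def[abs_def] f_def using Bseq_integrable_pmf[OF Bseq_cdf_test]
    by (simp add: Bochner_Integration.integral_diff)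
  moreover have "measure_pmf.expectation \<nu> f - m = W"
    unfolding f_def m_def W_def by (rule expectation_cdf_test_diff)
  ultimately show ?thesis using h_c_legendre[OF c W] by (simp add: t_def W_def)
qed

text \<open>h is nondecreasing on [0, \<infinity>), since h' r = ln (1 + r) \<ge> 0.\<close>
lemma h_fun_mono:
  assumes "0 \<le> x" "x \<le> y" shows "h_fun x \<le> h_fun y"
proof -
  have "(\<lambda>r. (1 + r) * ln (1 + r) - r) x \<le> (\<lambda>r. (1 + r) * ln (1 + r) - r) y"
  proof (rule DERIV_nonneg_imp_nondecreasing[OF assms(2)])
    fix r assume r: "x \<le> r" "r \<le> y"
    then have r0: "0 < 1 + r" using assms by simp
    have "((\<lambda>r. (1 + r) * ln (1 + r) - r) has_real_derivative (ln (1 + r))) (at r)"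
      by (rule derivative_eq_intros refl | use r0 in simp)+
    moreover have "0 \<le> ln (1 + r)" using r assms by simp
    ultimately show "\<exists>d. ((\<lambda>r. (1 + r) * ln (1 + r) - r) has_real_derivative d) (at r) \<and> 0 \<le> d" by blast
  qed
  then show ?thesis by (simp add: h_fun_def)
qed

lemma h_c_mono: "0 < c \<Longrightarrow> 0 \<le> x \<Longrightarrow> x \<le> y \<Longrightarrow> h_c c x \<le> h_c c y"
  unfolding h_c_def by (intro mult_left_mono h_fun_mono divide_right_mono) auto

lemma h_c_continuous: assumes "0 < c" "0 \<le> s" shows "isCont (h_c c) s"
proof -
  have "0 < 1 + s / c" using assms by (simp add: add_pos_nonneg)
  then show ?thesis unfolding h_c_def[abs_def] h_fun_def
    using assms by (auto intro!: continuous_intros)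
qed

lemma h_c_ge_self:
  assumes c: "0 < c" and x: "c * (exp 2 - 1) \<le> x"
  shows "x \<le> h_c c x"
proof -
  have "exp 2 \<le> 1 + x / c" using x c by (simp add: field_simps)
  moreover have "0 < exp (2::real)" by simp
  ultimately have L: "2 \<le> ln (1 + x / c)" by (metis ln_exp ln_le_cancel_iff order_less_le_trans)
  have x0: "0 \<le> x" using x c by (smt (verit) exp_ge_add_one_self mult_nonneg_nonneg)
  have "h_c c x = (c + x) * ln (1 + x / c) - x"
    unfolding h_c_def h_fun_def using c by (simp add: field_simps)
  also have "\<dots> \<ge> (c + x) * 2 - x" using L c x0 by (intro diff_right_mono mult_left_mono) auto
  finally have "(c + x) * 2 - x \<le> h_c c x" .
  moreover have "(c + x) * 2 - x = 2 * c + x" by (simp add: algebra_simps)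
  ultimately show ?thesis using c by linarith
qed

lemma h_c_ext_le_of_partial_sums:
  fixes d :: "nat \<Rightarrow> real" and W :: ennreal and H :: ereal
  assumes c: "0 < c" and d: "\<And>k. 0 \<le> d k"
    and partial: "\<And>N. ereal (h_c c (\<Sum>k<N. d k)) \<le> H"
    and W: "W \<le> (\<Sum>k. ennreal (d k))"
  shows "h_c_ext c W \<le> H"
proof (cases "summable d")
  case False
  have "H \<ge> ereal r" for r
  proof -
    obtain N where N: "max r (c * (exp 2 - 1)) < (\<Sum>k<N. d k)"
      using False summableI_nonneg_bounded[of d] d by (metis not_le)
    then have "r \<le> h_c c (\<Sum>k<N. d k)" using h_c_ge_self[OF c, of "\<Sum>k<N. d k"] by linarith
    then show ?thesis using partial[of N] by (metis ereal_less_eq(3) order_trans)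
  qed
  then have "H = \<infinity>" by (metis ereal_less_eq(1) ereal_top)
  then show ?thesis by simp
next
  case True
  define s where "s = suminf d"
  have s0: "0 \<le> s" unfolding s_def using True d by (simp add: suminf_nonneg)
  have "(\<lambda>N. h_c c (\<Sum>k<N. d k)) \<longlonglongrightarrow> h_c c s"
    unfolding s_def by (rule isCont_tendsto_compose[OF h_c_continuous[OF c s0[unfolded s_def]] summable_LIMSEQ[OF True]])
  then have hs: "ereal (h_c c s) \<le> H"
    using partial by (intro LIMSEQ_le_const2 [where X = "\<lambda>N. ereal (h_c c (\<Sum>k<N. d k))"]) auto
  have "W \<le> ennreal s" using W suminf_ennreal2[OF d True] by (simp add: s_def)
  then have "W \<noteq> \<infinity>" and "enn2real W \<le> s"
    using s0 by (auto simp: top_unique enn2real_leI)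
  then have "h_c_ext c W \<le> ereal (h_c c s)"
    using h_c_mono[OF c] by (simp add: h_c_ext_def)
  then show ?thesis using hs by (rule order_trans)
qed

theorem mainTheorem9:
  fixes a :: real and \<sigma> :: "real measure" and \<mu> :: "nat pmf"
  assumes "a > 0"
    and "prob_space \<sigma>"
    and "sets \<sigma> = sets borel"
    and "emeasure \<sigma> {0..a} = 1"
    and "\<And>k. pmf \<mu> k = (\<integral>l. poisson_weight l k \<partial>\<sigma>)"
  shows "\<forall>\<nu> :: nat pmf. h_c_ext (a + a\<^sup>2 / 4) (W1 \<nu> \<mu>) \<le> rel_entropy \<nu> \<mu>"
proof
  fix \<nu> :: "nat pmf"
  have \<sigma>: "mixing_law a \<sigma>" using assms(2-4) by (simp add: mixing_law_def)
  have c: "0 < a + a\<^sup>2 / 4" using assms(1) by (simp add: add_pos_nonneg)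
  have "ereal (h_c (a + a\<^sup>2 / 4) (cdf_gap \<nu> \<mu> N)) \<le> rel_entropy \<nu> \<mu>" for N
    by (rule entropy_bound_from_laplace[OF c mixture_laplace_bound[OF assms(1) \<sigma> assms(5)]])
  then show "h_c_ext (a + a\<^sup>2 / 4) (W1 \<nu> \<mu>) \<le> rel_entropy \<nu> \<mu>"
    by (intro h_c_ext_le_of_partial_sums[OF c _ _ W1_le_cdf_distance]) (simp_all add: cdf_gap_def)
qed

end
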